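(* Let $f(C_1,C_2)\in F$ be written as \[f(C_1,C_2)=\sum_{n,m\ge0}\alpha_{nm}C_1^nC_2^m+\sum_{j}C_1^{n_j}C_2^{m_j}\sum_i\beta_{ij}u_{ij}+g(C_1,C_2),\] where $\alpha_{nm},\beta_{ij}\in K$, the pairs $(n_j,m_j)$ are distinct, each $u_{ij}$ is the evaluation at $(C_1,C_2)$ of a left normed commutator of the form $[t_1,t_2,t_{s_3},\ldots,t_{s_l}]$ ($s_q\in\{1,2\}$), and $g(C_1,C_2)=\sum_u\gamma_uC_1^{a}C_2^{b}u_1\cdots u_k$ ($\gamma_u\in K$) is a linear combination of products of powers of $C_1,C_2$ with at least two ($k\ge 2$) such commutators $u_1,\dots,u_k$ of degree at least two. For each $i,j$ let $r_{ij}=\deg_{t_1}u_{ij}$, $s_{ij}=\deg_{t_2}u_{ij}$, and let $I_{ij}$ be the set of all indices $p$ with $\deg_{t_1}u_{pj}=r_{ij}$ and $\deg_{t_2}u_{pj}=s_{ij}$. Then $f(C_1,C_2)$ is central in $F$ if and only if $\alpha_{nm}=0$ for all $n,m$ with $n+m\ge1$ and, for every $i$ and $j$, $\sum_{p\in I_{ij}}\beta_{pj}=0$. Furthermore, $f(C_1,C_2)$ is strongly central if and only if it is central and $\alpha_{00}=0$.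
   Context: $K$ is an infinite field of characteristic different from 2. Let $X=\{x_1,x_2,x_1',x_2'\}$ and $Y=\{y_1,y_2,y_1',y_2'\}$, and let $K[X;Y]\cong K[X]\otimes_K E(Y)$ be the free supercommutative algebra: the $x$'s are even commuting variables, the $y$'s are odd pairwise anticommuting variables, and $E(Y)$ is the Grassmann algebra on the vector space with basis $Y$. Put $C_1=\begin{pmatrix} x_1&y_1\\ y_1'&x_1'\end{pmatrix}$, $C_2=\begin{pmatrix} x_2&y_2\\ y_2'&x_2'\end{pmatrix}$, and let $F=K[C_1,C_2]$ be the unital $K$-subalgebra of $M_2(K[X;Y])$ generated by $C_1,C_2$ (isomorphic to the relatively free algebra of rank 2 of $M_{11}(E)$); $C_i^0$ is the identity matrix. Commutators are $[a,b]=ab-ba$, left normed: $[a_1,\ldots,a_k]=[[a_1,\ldots,a_{k-1}],a_k]$; $t_1,t_2$ are free noncommuting variables. An element $a\in F$ is strongly central if $a$ is central in $F$ and $ab$ is central in $F$ for every $b\in F$. *)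

theory Defs
  imports Main "HOL-Library.Poly_Mapping"
begin

text \<open>Commutative polynomials over K in the even variables (indexed by nat;
  x1 = 0, x1' = 1, x2 = 2, x2' = 3).\<close>
type_synonym 'k xpoly = "(nat \<Rightarrow>\<^sub>0 nat) \<Rightarrow>\<^sub>0 'k"

definition xconst :: "'k::comm_ring_1 \<Rightarrow> 'k xpoly" where
  "xconst c = Poly_Mapping.single 0 c"

definition xvar :: "nat \<Rightarrow> 'k::comm_ring_1 xpoly" where
  "xvar i = Poly_Mapping.single (Poly_Mapping.single i 1) 1"

text \<open>An element of K[X] \<otimes> E(Y) is given by its coefficient function:
  S (a finite set of odd-variable indices, y1 = 0, y1' = 1, y2 = 2, y2' = 3)
  is mapped to the K[X]-coefficient of the Grassmann monomial y_S, the product of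
  the y_i, i in S, in increasing order of indices.\<close>
datatype 'a scc = SC (coeffs: "nat set \<Rightarrow> 'a")

type_synonym 'k sc = "'k xpoly scc"

instantiation scc :: (comm_ring_1) ab_group_add
begin
definition "zero_scc = SC (\<lambda>S. 0)"
definition "plus_scc a b = SC (\<lambda>S. coeffs a S + coeffs b S)"
definition "minus_scc a b = SC (\<lambda>S. coeffs a S - coeffs b S)"
definition "uminus_scc a = SC (\<lambda>S. - coeffs a S)"
instance
  by standard (auto simp: zero_scc_def plus_scc_def minus_scc_def uminus_scc_def
      algebra_simps intro!: scc.expand)
end

text \<open>Sign of the reordering y_T y_U = sign * y_{T \<union> U} (T, U disjoint).\<close>
definition ysign :: "nat set \<Rightarrow> nat set \<Rightarrow> 'k::comm_ring_1 xpoly" where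
  "ysign T U = (-1) ^ card {(i, j). i \<in> T \<and> j \<in> U \<and> j < i}"

text \<open>Supercommutative product (the y's anticommute, the x's are central).\<close>
definition sc_mult :: "'k::comm_ring_1 sc \<Rightarrow> 'k sc \<Rightarrow> 'k sc" where
  "sc_mult a b = SC (\<lambda>S. \<Sum>T\<in>Pow S. ysign T (S - T) * coeffs a T * coeffs b (S - T))"

definition sc_const :: "'k::comm_ring_1 \<Rightarrow> 'k sc" where
  "sc_const c = SC (\<lambda>S. if S = {} then xconst c else 0)"

definition sc_x :: "nat \<Rightarrow> 'k::comm_ring_1 sc" where
  "sc_x i = SC (\<lambda>S. if S = {} then xvar i else 0)"

definition sc_y :: "nat \<Rightarrow> 'k::comm_ring_1 sc" where
  "sc_y i = SC (\<lambda>S. if S = {i} then 1 else 0)"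

datatype 'a m2 = M2 'a 'a 'a 'a  \<comment> \<open>M2 a11 a12 a21 a22\<close>

instantiation m2 :: (ab_group_add) ab_group_add
begin
fun plus_m2 where "plus_m2 (M2 a b c d) (M2 a' b' c' d') = M2 (a+a') (b+b') (c+c') (d+d')"
fun minus_m2 where "minus_m2 (M2 a b c d) (M2 a' b' c' d') = M2 (a-a') (b-b') (c-c') (d-d')"
fun uminus_m2 where "uminus_m2 (M2 a b c d) = M2 (-a) (-b) (-c) (-d)"
definition "zero_m2 = M2 0 0 0 0"
instance
proof
  fix x y z :: "'a m2"
  show "x + y + z = x + (y + z)" by (cases x; cases y; cases z) (simp add: add.assoc)
  show "x + y = y + x" by (cases x; cases y) (simp add: add.commute)
  show "0 + x = x" by (cases x) (simp add: zero_m2_def)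
  show "- x + x = 0" by (cases x) (simp add: zero_m2_def)
  show "x - y = x + - y" by (cases x; cases y) simp
qed
end

fun mmult :: "'k::comm_ring_1 sc m2 \<Rightarrow> 'k sc m2 \<Rightarrow> 'k sc m2" where
  "mmult (M2 a b c d) (M2 a' b' c' d') =
     M2 (sc_mult a a' + sc_mult b c') (sc_mult a b' + sc_mult b d')
        (sc_mult c a' + sc_mult d c') (sc_mult c b' + sc_mult d d')"

definition mone :: "'k::comm_ring_1 sc m2" where
  "mone = M2 (sc_const 1) 0 0 (sc_const 1)"

fun msmult :: "'k::comm_ring_1 \<Rightarrow> 'k sc m2 \<Rightarrow> 'k sc m2" where
  "msmult k (M2 a b c d) =
     M2 (sc_mult (sc_const k) a) (sc_mult (sc_const k) b) (sc_mult (sc_const k) c) (sc_mult (sc_const k) d)"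

primrec mpow :: "'k::comm_ring_1 sc m2 \<Rightarrow> nat \<Rightarrow> 'k sc m2" where
  "mpow A 0 = mone"
| "mpow A (Suc n) = mmult A (mpow A n)"

definition mprod_list :: "'k::comm_ring_1 sc m2 list \<Rightarrow> 'k sc m2" where
  "mprod_list xs = foldr mmult xs mone"

definition C1 :: "'k::comm_ring_1 sc m2" where
  "C1 = M2 (sc_x 0) (sc_y 0) (sc_y 1) (sc_x 1)"

definition C2 :: "'k::comm_ring_1 sc m2" where
  "C2 = M2 (sc_x 2) (sc_y 2) (sc_y 3) (sc_x 3)"

inductive_set algF :: "'k::comm_ring_1 sc m2 set" where
  one: "mone \<in> algF"
| gen1: "C1 \<in> algF"
| gen2: "C2 \<in> algF"
| smult: "a \<in> algF \<Longrightarrow> msmult k a \<in> algF"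
| add: "a \<in> algF \<Longrightarrow> b \<in> algF \<Longrightarrow> a + b \<in> algF"
| mult: "a \<in> algF \<Longrightarrow> b \<in> algF \<Longrightarrow> mmult a b \<in> algF"

definition central_F :: "'k::comm_ring_1 sc m2 \<Rightarrow> bool" where
  "central_F a \<longleftrightarrow> a \<in> algF \<and> (\<forall>b\<in>algF. mmult a b = mmult b a)"

definition strongly_central_F :: "'k::comm_ring_1 sc m2 \<Rightarrow> bool" where
  "strongly_central_F a \<longleftrightarrow> central_F a \<and> (\<forall>b\<in>algF. central_F (mmult a b))"

text \<open>A word is a list of letters in {1,2}; letter i stands for t_i.\<close>
definition genC :: "nat \<Rightarrow> 'k::comm_ring_1 sc m2" where
  "genC i = (if i = 1 then C1 else C2)"

definition mcomm :: "'k::comm_ring_1 sc m2 \<Rightarrow> 'k sc m2 \<Rightarrow> 'k sc m2" where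
  "mcomm a b = mmult a b - mmult b a"

fun comm_eval :: "nat list \<Rightarrow> 'k::comm_ring_1 sc m2" where
  "comm_eval [] = mone"
| "comm_eval (a # ws) = foldl (\<lambda>acc b. mcomm acc (genC b)) (genC a) ws"

text \<open>The commutator [t_1, t_2, t_{s_3}, ..., t_{s_l}] is encoded by its tail
  [s_3, ..., s_l]; its full word is 1 # 2 # tail.\<close>
definition ucomm :: "nat list \<Rightarrow> 'k::comm_ring_1 sc m2" where
  "ucomm ws = comm_eval (1 # 2 # ws)"

definition deg1 :: "nat list \<Rightarrow> nat" where
  "deg1 ws = count_list (1 # 2 # ws) 1"

definition deg2 :: "nat list \<Rightarrow> nat" where
  "deg2 ws = count_list (1 # 2 # ws) 2"

end

theory Submission
  imports Defs "HOL-Computational_Algebra.Polynomial"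
begin

text \<open>Every commutator [t1, t2, t_s3, ..., t_sl] evaluated at (C1, C2) is a K[X]-multiple of one of
  the three basic commutators [C1, C2], [C1, C2, C1], [C1, C2, C2], the multiplier being a product
  of the differences x1 - x1', x2 - x2'. A product of two basic commutators commutes with C1 and
  C2 and annihilates [C1, C2], and so does (x2 - x2')[C1, C2, C1] - (x1 - x1')[C1, C2, C2]; such
  elements multiply F into its centre. Hence the products of at least two commutators, and the
  differences of two commutators of the same multidegree, are harmless, which gives sufficiency.
  For necessity, commuting with C1 and C2 forces the constant terms of the diagonal entries to agree
  and the coefficient of y2 in the entry (1,2) to vanish; both are polynomial identities in the x's,
  and evaluating them over the infinite field K separates the monomials C1^n C2^m and the
  multidegrees of the commutators. Finally a scalar c plus such an element is strongly central only
  if c [C1, C2] = 0, that is c = 0.\<close>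

hide_const (open) Polynomial.coeffs

section \<open>The supercommutative algebra as a ring\<close>

lemma scc_eqI: "(\<And>S. coeffs a S = coeffs b S) \<Longrightarrow> a = b"
  by (rule scc.expand) auto

lemma coeffs_zero [simp]: "coeffs (0 :: 'a::comm_ring_1 scc) S = 0"
  and coeffs_add [simp]: "coeffs (a + b :: 'a scc) S = coeffs a S + coeffs b S"
  and coeffs_diff [simp]: "coeffs (a - b :: 'a scc) S = coeffs a S - coeffs b S"
  and coeffs_uminus [simp]: "coeffs (- a :: 'a scc) S = - coeffs a S"
  by (simp_all add: zero_scc_def plus_scc_def minus_scc_def uminus_scc_def)

lemma coeffs_sum: "coeffs (sum f A :: 'a::comm_ring_1 scc) S = (\<Sum>x\<in>A. coeffs (f x) S)"
  by (induction A rule: infinite_finite_induct) auto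

definition inversions :: "nat set \<Rightarrow> nat set \<Rightarrow> nat" where
  "inversions T U = (\<Sum>i\<in>T. \<Sum>j\<in>U. if j < i then 1 else 0)"

lemma ysign_eq_inversions:
  assumes "finite T" "finite U"
  shows "ysign T U = (-1) ^ inversions T U"
proof -
  have "{(i, j). i \<in> T \<and> j \<in> U \<and> j < i} = Sigma T (\<lambda>i. {j \<in> U. j < i})" by auto
  then have "card {(i, j). i \<in> T \<and> j \<in> U \<and> j < i} = (\<Sum>i\<in>T. card {j \<in> U. j < i})"
    using assms by (simp add: card_SigmaI)
  also have "\<dots> = inversions T U"
    unfolding inversions_def using assms(2) by (simp add: sum.If_cases Int_def)
  finally show ?thesis by (simp add: ysign_def)
qed

lemma inversions_Un_left:
  "finite T \<Longrightarrow> finite U \<Longrightarrow> T \<inter> U = {} \<Longrightarrow> inversions (T \<union> U) V = inversions T V + inversions U V"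
  by (simp add: inversions_def sum.union_disjoint)

lemma inversions_Un_right:
  "finite U \<Longrightarrow> finite V \<Longrightarrow> U \<inter> V = {} \<Longrightarrow> inversions T (U \<union> V) = inversions T U + inversions T V"
  by (simp add: inversions_def sum.union_disjoint sum.distrib)

text \<open>The product of K[X;Y] (sc_mult), stated for an arbitrary commutative coefficient ring.\<close>

instantiation scc :: (comm_ring_1) times
begin

definition times_scc :: "'a scc \<Rightarrow> 'a scc \<Rightarrow> 'a scc" where
  "times_scc a b = SC (\<lambda>S. \<Sum>T\<in>Pow S. (-1) ^ inversions T (S - T) * coeffs a T * coeffs b (S - T))"

instance ..

end

lemma coeffs_mult:
  "coeffs (a * b) S = (\<Sum>T\<in>Pow S. (-1) ^ inversions T (S - T) * coeffs a T * coeffs b (S - T))"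
  by (simp add: times_scc_def)

lemma inversions_split:
  assumes "T \<subseteq> R" "R \<subseteq> S" "finite S"
  shows "inversions R (S - R) + inversions T (R - T) = inversions T (S - T) + inversions (R - T) (S - R)"
proof -
  have fin: "finite R" "finite T" using assms finite_subset by metis+
  have "T \<union> (R - T) = R" "(R - T) \<union> (S - R) = S - T" using assms by auto
  then have "inversions R (S - R) = inversions T (S - R) + inversions (R - T) (S - R)"
    "inversions T (S - T) = inversions T (R - T) + inversions T (S - R)"
    using inversions_Un_left[of T "R - T" "S - R"] inversions_Un_right[of "R - T" "S - R" T] fin assms
    by auto
  then show ?thesis by simp
qed

text \<open>Both triple products sum over the decompositions of S into three disjoint parts, indexed by
  (T \<union> U, T) on the left and by (T, U) on the right.\<close>

lemma scc_mult_assoc: "a * b * c = a * (b * c :: 'a::comm_ring_1 scc)"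
proof (rule scc_eqI)
  fix S
  show "coeffs (a * b * c) S = coeffs (a * (b * c)) S"
  proof (cases "finite S")
    case False
    then show ?thesis by (simp add: coeffs_mult)
  next
    case fin: True
    define sg :: "nat set \<Rightarrow> nat set \<Rightarrow> 'a" where "sg T U = (-1) ^ inversions T U" for T U
    define F where "F = (\<lambda>(R, T). sg R (S - R) * sg T (R - T) * coeffs a T * coeffs b (R - T) * coeffs c (S - R))"
    define G where "G = (\<lambda>(T, U). sg T (S - T) * sg U (S - T - U) * coeffs a T * coeffs b U * coeffs c (S - T - U))"
    have finPow: "\<And>R. R \<in> Pow S \<Longrightarrow> finite (Pow R)" "finite (Pow S)" "\<And>T. T \<in> Pow S \<Longrightarrow> finite (Pow (S - T))"
      using fin finite_subset by auto
    have "coeffs (a * b * c) S = (\<Sum>R\<in>Pow S. \<Sum>T\<in>Pow R. F (R, T))"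
      unfolding coeffs_mult F_def sg_def by (simp add: sum_distrib_left sum_distrib_right mult.assoc)
    also have "\<dots> = sum F (Sigma (Pow S) Pow)"
      using sum.Sigma[of "Pow S" Pow "\<lambda>R T. F (R, T)"] finPow by simp
    also have "\<dots> = sum G (Sigma (Pow S) (\<lambda>T. Pow (S - T)))"
    proof (rule sum.reindex_bij_witness[where j = "\<lambda>(R, T). (T, R - T)" and i = "\<lambda>(T, U). (T \<union> U, T)"])
      fix x assume "x \<in> Sigma (Pow S) Pow"
      then obtain R T where x: "x = (R, T)" "R \<subseteq> S" "T \<subseteq> R" by auto
      show "(case case x of (R, T) \<Rightarrow> (T, R - T) of (T, U) \<Rightarrow> (T \<union> U, T)) = x"
        "(case x of (R, T) \<Rightarrow> (T, R - T)) \<in> Sigma (Pow S) (\<lambda>T. Pow (S - T))"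
        using x by auto
      have "sg R (S - R) * sg T (R - T) = sg T (S - T) * sg (R - T) (S - R)"
        using inversions_split[OF x(3,2) fin] unfolding sg_def by (metis power_add)
      moreover have "S - T - (R - T) = S - R" using x by auto
      ultimately show "G (case x of (R, T) \<Rightarrow> (T, R - T)) = F x"
        using x unfolding F_def G_def by (simp add: mult_ac)
    next
      fix y assume "y \<in> Sigma (Pow S) (\<lambda>T. Pow (S - T))"
      then obtain T U where y: "y = (T, U)" "T \<subseteq> S" "U \<subseteq> S - T" by auto
      show "(case case y of (T, U) \<Rightarrow> (T \<union> U, T) of (R, T) \<Rightarrow> (T, R - T)) = y"
        "(case y of (T, U) \<Rightarrow> (T \<union> U, T)) \<in> Sigma (Pow S) Pow"
        using y by auto
    qed
    also have "\<dots> = (\<Sum>T\<in>Pow S. \<Sum>U\<in>Pow (S - T). G (T, U))"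
      using sum.Sigma[of "Pow S" "\<lambda>T. Pow (S - T)" "\<lambda>R T. G (R, T)"] finPow by simp
    also have "\<dots> = coeffs (a * (b * c)) S"
      unfolding coeffs_mult G_def sg_def by (simp add: sum_distrib_left sum_distrib_right mult_ac)
    finally show ?thesis .
  qed
qed

instance scc :: (comm_ring_1) ring
proof
  fix a b c :: "'a scc"
  show "a * b * c = a * (b * c)"
    by (rule scc_mult_assoc)
  show "(a + b) * c = a * c + b * c" "a * (b + c) = a * b + a * c"
    by (rule scc_eqI, simp add: coeffs_mult distrib_left distrib_right sum.distrib)+
qed

lemma sc_mult_eq_times [simp]:
  fixes a b :: "'k::comm_ring_1 sc"
  shows "sc_mult a b = a * b"
proof (rule scc_eqI)
  fix S
  show "coeffs (sc_mult a b) S = coeffs (a * b) S"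
  proof (cases "finite S")
    case True
    have "ysign T (S - T) = ((-1) ^ inversions T (S - T) :: 'k xpoly)" if "T \<subseteq> S" for T
      using that True by (metis ysign_eq_inversions finite_Diff finite_subset)
    then show ?thesis by (auto simp: sc_mult_def coeffs_mult intro!: sum.cong)
  qed (simp add: sc_mult_def coeffs_mult)
qed

definition sc_scalar :: "'a::comm_ring_1 \<Rightarrow> 'a scc" where
  "sc_scalar e = SC (\<lambda>S. if S = {} then e else 0)"

text \<open>The type scc also contains coefficient functions that are nonzero on infinite index sets;
  products never are, and the elements of K[X;Y] are the finitary ones.\<close>

definition finitary :: "'a::comm_ring_1 scc \<Rightarrow> bool" where
  "finitary a \<longleftrightarrow> (\<forall>S. infinite S \<longrightarrow> coeffs a S = 0)"

lemma coeffs_sc_scalar: "coeffs (sc_scalar e) S = (if S = {} then e else 0)"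
  by (simp add: sc_scalar_def)

lemma finitary_mult [simp]: "finitary (a * b)"
  and finitary_add [simp]: "finitary a \<Longrightarrow> finitary b \<Longrightarrow> finitary (a + b)"
  and finitary_diff [simp]: "finitary a \<Longrightarrow> finitary b \<Longrightarrow> finitary (a - b)"
  and finitary_uminus [simp]: "finitary a \<Longrightarrow> finitary (- a)"
  and finitary_zero [simp]: "finitary 0"
  and finitary_sc_scalar [simp]: "finitary (sc_scalar e)"
  and finitary_sc_y [simp]: "finitary (sc_y i)"
  by (auto simp: finitary_def coeffs_mult coeffs_sc_scalar sc_y_def)

lemma coeffs_sc_scalar_mult: "coeffs (sc_scalar e * a) S = (if finite S then e * coeffs a S else 0)"
proof (cases "finite S")
  case True
  have "coeffs (sc_scalar e * a) S = (\<Sum>T\<in>Pow S. if T = {} then e * coeffs a S else 0)"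
    unfolding coeffs_mult by (rule sum.cong) (auto simp: coeffs_sc_scalar inversions_def)
  then show ?thesis using True by (simp add: sum.delta')
qed (simp add: coeffs_mult)

lemma coeffs_mult_sc_scalar: "coeffs (a * sc_scalar e) S = (if finite S then e * coeffs a S else 0)"
proof (cases "finite S")
  case True
  have "coeffs (a * sc_scalar e) S = (\<Sum>T\<in>Pow S. if T = S then e * coeffs a S else 0)"
    unfolding coeffs_mult by (rule sum.cong) (auto simp: coeffs_sc_scalar inversions_def)
  then show ?thesis using True by (simp add: sum.delta')
qed (simp add: coeffs_mult)

lemma sc_scalar_mult_commute: "sc_scalar e * a = a * sc_scalar e"
  by (rule scc_eqI) (simp add: coeffs_sc_scalar_mult coeffs_mult_sc_scalar)

lemma sc_scalar_mult_sc_scalar: "sc_scalar e * sc_scalar f = sc_scalar (e * f)"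
  by (rule scc_eqI) (simp add: coeffs_sc_scalar_mult coeffs_sc_scalar)

lemma sc_scalar_one_mult: "finitary a \<Longrightarrow> sc_scalar 1 * a = a"
  by (rule scc_eqI) (simp add: coeffs_sc_scalar_mult finitary_def)

lemma sc_scalar_add: "sc_scalar (e + f) = sc_scalar e + sc_scalar f"
  and sc_scalar_uminus: "sc_scalar (- e) = - sc_scalar e"
  and sc_scalar_zero [simp]: "sc_scalar 0 = 0"
  by (rule scc_eqI; simp add: coeffs_sc_scalar)+

lemma xconst_one [simp]: "xconst 1 = 1"
  unfolding xconst_def by (rule poly_mapping_eqI) (simp add: lookup_one lookup_single when_def)

lemma xconst_zero [simp]: "xconst 0 = 0"
  by (simp add: xconst_def)

lemma xconst_add: "xconst (a + b) = xconst a + xconst b"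
  by (simp add: xconst_def single_add)

lemma xconst_sum: "xconst (sum f A) = (\<Sum>x\<in>A. xconst (f x))"
  by (induction A rule: infinite_finite_induct) (simp_all add: xconst_add)

lemma sc_const_eq: "sc_const c = sc_scalar (xconst c)"
  and sc_x_eq: "sc_x i = sc_scalar (xvar i)"
  by (simp_all add: sc_const_def sc_x_def sc_scalar_def)

lemma coeffs_mult_empty: "coeffs (a * b) {} = coeffs a {} * coeffs b {}"
  by (simp add: coeffs_mult inversions_def)

lemma coeffs_mult_singleton:
  "coeffs (a * b) {i} = coeffs a {} * coeffs b {i} + coeffs a {i} * coeffs b {}"
proof -
  have "Pow {i} = {{}, {i}}" by auto
  then show ?thesis by (simp add: coeffs_mult inversions_def)
qed

instantiation m2 :: ("{plus, times}") times
begin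
fun times_m2 :: "'a m2 \<Rightarrow> 'a m2 \<Rightarrow> 'a m2" where
  "M2 a b c d * M2 a' b' c' d' = M2 (a * a' + b * c') (a * b' + b * d') (c * a' + d * c') (c * b' + d * d')"
instance ..
end

instance m2 :: (ring) ring
proof
  fix A B C :: "'a m2"
  show "A * B * C = A * (B * C)"
    by (cases A; cases B; cases C) (simp add: distrib_left distrib_right mult.assoc add_ac)
  show "(A + B) * C = A * C + B * C" "A * (B + C) = A * B + A * C"
    by (cases A; cases B; cases C; simp add: distrib_left distrib_right add_ac)+
qed

lemma mmult_eq_times [simp]: "mmult A B = A * B"
  by (cases A; cases B) simp

lemma zero_m2_eq: "0 = M2 0 0 0 0"
  by (simp add: zero_m2_def)

fun m11 :: "'a m2 \<Rightarrow> 'a" where "m11 (M2 a b c d) = a"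
fun m12 :: "'a m2 \<Rightarrow> 'a" where "m12 (M2 a b c d) = b"
fun m21 :: "'a m2 \<Rightarrow> 'a" where "m21 (M2 a b c d) = c"
fun m22 :: "'a m2 \<Rightarrow> 'a" where "m22 (M2 a b c d) = d"

lemma entries_add: "m11 (A + B) = m11 A + m11 B" "m12 (A + B) = m12 A + m12 B" "m22 (A + B) = m22 A + m22 B"
  by (cases A; cases B; simp)+

lemma entries_sum:
  "m11 (sum f S) = (\<Sum>x\<in>S. m11 (f x))" "m12 (sum f S) = (\<Sum>x\<in>S. m12 (f x))"
  "m22 (sum f S) = (\<Sum>x\<in>S. m22 (f x))"
  by (induction S rule: infinite_finite_induct) (auto simp: entries_add zero_m2_def)

lemma entries_mult:
  "m11 (A * B) = m11 A * m11 B + m12 A * m21 B" "m12 (A * B) = m11 A * m12 B + m12 A * m22 B"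
  "m21 (A * B) = m21 A * m11 B + m22 A * m21 B" "m22 (A * B) = m21 A * m12 B + m22 A * m22 B"
  by (cases A; cases B; simp)+

definition mscalar :: "'k::comm_ring_1 xpoly \<Rightarrow> 'k sc m2" where
  "mscalar e = M2 (sc_scalar e) 0 0 (sc_scalar e)"

lemma mscalar_mult_commute: "mscalar e * A = A * mscalar e"
  by (cases A) (simp add: mscalar_def sc_scalar_mult_commute)

lemma mult_mscalar_mult: "A * (mscalar e * B) = mscalar e * (A * B)"
  by (simp only: mult.assoc[symmetric] mscalar_mult_commute[of e A])

lemma mscalar_mult_mscalar: "mscalar e * mscalar f = mscalar (e * f)"
  by (simp add: mscalar_def sc_scalar_mult_sc_scalar)

lemma mscalar_add: "mscalar (e + f) = mscalar e + mscalar f"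
  and mscalar_uminus: "mscalar (- e) = - mscalar e"
  and mscalar_zero [simp]: "mscalar 0 = 0"
  by (simp_all add: mscalar_def sc_scalar_add sc_scalar_uminus zero_m2_eq)

lemma mscalar_sum: "mscalar (sum f A) = (\<Sum>x\<in>A. mscalar (f x))"
  by (induction A rule: infinite_finite_induct) (simp_all add: mscalar_add)

lemma mone_eq_mscalar: "mone = mscalar 1"
  by (simp add: mone_def mscalar_def sc_const_eq)

lemma msmult_eq: "msmult k A = mscalar (xconst k) * A"
  by (cases A) (simp add: mscalar_def sc_const_eq)

lemma mscalar_one_mult: "pred_m2 finitary A \<Longrightarrow> mscalar 1 * A = A"
  by (cases A) (simp add: mscalar_def sc_scalar_one_mult)

lemma mone_mult: "pred_m2 finitary A \<Longrightarrow> mone * A = A"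
  and mult_mone: "pred_m2 finitary A \<Longrightarrow> A * mone = A"
  by (simp_all add: mone_eq_mscalar mscalar_one_mult flip: mscalar_mult_commute)

lemma mcomm_self [simp]: "mcomm A A = 0"
  by (simp add: mcomm_def)

lemma mcomm_add_left: "mcomm (A + B) C = mcomm A C + mcomm B C"
  and mcomm_diff_left: "mcomm (A - B) C = mcomm A C - mcomm B C"
  and mcomm_uminus_left: "mcomm (- A) C = - mcomm A C"
  and mcomm_zero_left [simp]: "mcomm 0 C = 0"
  by (simp_all add: mcomm_def algebra_simps)

lemma mcomm_mscalar_mult: "mcomm (mscalar e * X) Y = mscalar e * mcomm X Y"
  by (simp add: mcomm_def mult.assoc right_diff_distrib mult_mscalar_mult)

lemma finitary_matrix_mult [simp]: "pred_m2 finitary (A * B)"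
  by (cases A; cases B) simp

lemma finitary_matrix_add [simp]: "pred_m2 finitary A \<Longrightarrow> pred_m2 finitary B \<Longrightarrow> pred_m2 finitary (A + B)"
  by (cases A; cases B) simp

lemma finitary_matrix_zero [simp]: "pred_m2 finitary 0"
  by (simp add: zero_m2_eq)

lemma finitary_matrix_uminus [simp]: "pred_m2 finitary A \<Longrightarrow> pred_m2 finitary (- A)"
  by (cases A) simp

lemma finitary_matrix_diff [simp]: "pred_m2 finitary A \<Longrightarrow> pred_m2 finitary B \<Longrightarrow> pred_m2 finitary (A - B)"
  by (cases A; cases B) simp

lemma finitary_C1 [simp]: "pred_m2 finitary C1"
  and finitary_C2 [simp]: "pred_m2 finitary C2"
  and finitary_mscalar [simp]: "pred_m2 finitary (mscalar e)"
  by (simp_all add: C1_def C2_def mscalar_def sc_x_eq)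

lemma finitary_algF: "a \<in> algF \<Longrightarrow> pred_m2 finitary a"
  by (induction rule: algF.induct) (simp_all add: mone_eq_mscalar msmult_eq)

lemma algF_mult: "a \<in> algF \<Longrightarrow> b \<in> algF \<Longrightarrow> a * b \<in> algF"
  using algF.mult by simp

lemma algF_zero: "0 \<in> algF"
  using algF.smult[OF algF.one, of 0] by (simp add: msmult_eq)

lemma algF_uminus: "a \<in> algF \<Longrightarrow> - a \<in> algF"
  using algF.smult[of a "-1"] finitary_algF[of a]
  by (simp add: msmult_eq xconst_def single_uminus mscalar_uminus mscalar_one_mult)

lemma algF_diff: "a \<in> algF \<Longrightarrow> b \<in> algF \<Longrightarrow> a - b \<in> algF"
  using algF.add[OF _ algF_uminus] by (metis diff_conv_add_uminus)

lemma algF_mcomm: "a \<in> algF \<Longrightarrow> b \<in> algF \<Longrightarrow> mcomm a b \<in> algF"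
  by (simp add: mcomm_def algF_diff algF_mult)

lemma algF_sum: "(\<And>x. x \<in> S \<Longrightarrow> f x \<in> algF) \<Longrightarrow> sum f S \<in> algF"
  by (induction S rule: infinite_finite_induct) (auto simp: algF_zero algF.add)

lemma algF_genC: "genC b \<in> algF"
  by (simp add: genC_def algF.gen1 algF.gen2)

lemma algF_mpow: "A \<in> algF \<Longrightarrow> mpow A n \<in> algF"
  by (induction n) (auto simp: algF.one algF_mult)

lemma algF_comm_eval: "comm_eval ws \<in> algF"
proof (cases ws)
  case (Cons a ws')
  have "foldl (\<lambda>acc b. mcomm acc (genC b)) acc ws' \<in> algF" if "acc \<in> algF" for acc
    using that by (induction ws' arbitrary: acc) (auto simp: algF_mcomm algF_genC)
  from this[OF algF_genC] show ?thesis using Cons by simp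
qed (simp add: algF.one)

lemma algF_ucomm: "ucomm ws \<in> algF"
  unfolding ucomm_def by (rule algF_comm_eval)

lemma finitary_ucomm [simp]: "pred_m2 finitary (ucomm w)"
  using finitary_algF[OF algF_ucomm] .

lemma algF_mprod_list: "(\<And>x. x \<in> set ms \<Longrightarrow> x \<in> algF) \<Longrightarrow> mprod_list ms \<in> algF"
  by (induction ms) (auto simp: mprod_list_def algF.one algF_mult)

section \<open>A concrete model of the Grassmann algebra on four generators\<close>

definition sc_monom :: "nat set \<Rightarrow> 'a::comm_ring_1 \<Rightarrow> 'a scc" where
  "sc_monom S c = SC (\<lambda>T. if T = S then c else 0)"

lemma coeffs_sc_monom: "coeffs (sc_monom S c) T = (if T = S then c else 0)"
  by (simp add: sc_monom_def)

lemma sc_monom_add: "sc_monom S (a + b) = sc_monom S a + sc_monom S b"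
  and sc_monom_diff: "sc_monom S (a - b) = sc_monom S a - sc_monom S b"
  and sc_monom_uminus: "sc_monom S (- a) = - sc_monom S a"
  and sc_monom_zero [simp]: "sc_monom S 0 = 0"
  by (rule scc_eqI; simp add: coeffs_sc_monom)+

lemma sc_monom_mult:
  assumes "finite S" "finite T"
  shows "sc_monom S a * sc_monom T b =
    (if S \<inter> T = {} then sc_monom (S \<union> T) ((-1) ^ inversions S T * a * b) else 0)"
proof (rule scc_eqI)
  fix R
  show "coeffs (sc_monom S a * sc_monom T b) R =
      coeffs (if S \<inter> T = {} then sc_monom (S \<union> T) ((-1) ^ inversions S T * a * b) else 0) R"
  proof (cases "finite R")
    case False
    then have "R \<noteq> S \<union> T" using assms by auto
    then show ?thesis using False by (simp add: coeffs_mult coeffs_sc_monom)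
  next
    case True
    have "coeffs (sc_monom S a * sc_monom T b) R =
        (\<Sum>U\<in>Pow R. if U = S then (-1) ^ inversions S (R - S) * a * (if R - S = T then b else 0) else 0)"
      unfolding coeffs_mult by (rule sum.cong) (auto simp: coeffs_sc_monom)
    also have "\<dots> = (if S \<subseteq> R then (-1) ^ inversions S (R - S) * a * (if R - S = T then b else 0) else 0)"
      using True by (simp add: sum.delta')
    also have "\<dots> = coeffs (if S \<inter> T = {} then sc_monom (S \<union> T) ((-1) ^ inversions S T * a * b) else 0) R"
    proof (cases "S \<subseteq> R \<and> R - S = T")
      case True
      then have "S \<inter> T = {}" "R = S \<union> T" by auto
      then show ?thesis using True by (simp add: coeffs_sc_monom)
    next
      case False
      then have "\<not> (S \<inter> T = {} \<and> R = S \<union> T)" by auto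
      then show ?thesis using False by (auto simp: coeffs_sc_monom)
    qed
    finally show ?thesis .
  qed
qed

text \<open>Identities between particular matrices are checked by computing in the Grassmann algebra on
  y1, y1', y2, y2' (indices 0, 1, 2, 3) over a commutative ring, with elements given by their
  16 coefficients: in T16 a0 ... a15, a_k is the coefficient of the product of the y_i with i
  among the binary digits of k.\<close>

datatype 'a t16 = T16 'a 'a 'a 'a 'a 'a 'a 'a 'a 'a 'a 'a 'a 'a 'a 'a

instantiation t16 :: (comm_ring_1) times
begin

fun times_t16 :: "'a t16 \<Rightarrow> 'a t16 \<Rightarrow> 'a t16" where
  "times_t16 (T16 a0 a1 a2 a3 a4 a5 a6 a7 a8 a9 a10 a11 a12 a13 a14 a15)
       (T16 b0 b1 b2 b3 b4 b5 b6 b7 b8 b9 b10 b11 b12 b13 b14 b15) =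
     T16 (a0 * b0) (a0 * b1 + a1 * b0) (a0 * b2 + a2 * b0) (a0 * b3 + a1 * b2 - a2 * b1 + a3 * b0)
       (a0 * b4 + a4 * b0) (a0 * b5 + a1 * b4 - a4 * b1 + a5 * b0) (a0 * b6 + a2 * b4 - a4 * b2 + a6 * b0)
       (a0 * b7 + a1 * b6 - a2 * b5 + a3 * b4 + a4 * b3 - a5 * b2 + a6 * b1 + a7 * b0)
       (a0 * b8 + a8 * b0) (a0 * b9 + a1 * b8 - a8 * b1 + a9 * b0) (a0 * b10 + a2 * b8 - a8 * b2 + a10 * b0)
       (a0 * b11 + a1 * b10 - a2 * b9 + a3 * b8 + a8 * b3 - a9 * b2 + a10 * b1 + a11 * b0)
       (a0 * b12 + a4 * b8 - a8 * b4 + a12 * b0)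
       (a0 * b13 + a1 * b12 - a4 * b9 + a5 * b8 + a8 * b5 - a9 * b4 + a12 * b1 + a13 * b0)
       (a0 * b14 + a2 * b12 - a4 * b10 + a6 * b8 + a8 * b6 - a10 * b4 + a12 * b2 + a14 * b0)
       (a0 * b15 + a1 * b14 - a2 * b13 + a3 * b12 + a4 * b11 - a5 * b10 + a6 * b9 + a7 * b8
        - a8 * b7 + a9 * b6 - a10 * b5 - a11 * b4 + a12 * b3 + a13 * b2 - a14 * b1 + a15 * b0)"

instance ..

end

fun sc_of_t16 :: "'a::comm_ring_1 t16 \<Rightarrow> 'a scc" where
  "sc_of_t16 (T16 a0 a1 a2 a3 a4 a5 a6 a7 a8 a9 a10 a11 a12 a13 a14 a15) =
     sc_monom {} a0 + sc_monom {0} a1 + sc_monom {1} a2 + sc_monom {0, 1} a3 + sc_monom {2} a4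
   + sc_monom {0, 2} a5 + sc_monom {1, 2} a6 + sc_monom {0, 1, 2} a7 + sc_monom {3} a8
   + sc_monom {0, 3} a9 + sc_monom {1, 3} a10 + sc_monom {0, 1, 3} a11 + sc_monom {2, 3} a12
   + sc_monom {0, 2, 3} a13 + sc_monom {1, 2, 3} a14 + sc_monom {0, 1, 2, 3} a15"

lemma sc_of_t16_mult: "sc_of_t16 (t * u) = sc_of_t16 t * sc_of_t16 u"
  by (cases t; cases u)
    (simp add: sc_monom_mult distrib_left distrib_right inversions_def insert_commute
       sc_monom_add sc_monom_diff sc_monom_uminus algebra_simps)

instantiation t16 :: (ab_group_add) ab_group_add
begin
fun plus_t16 :: "'a t16 \<Rightarrow> 'a t16 \<Rightarrow> 'a t16" where
  "T16 a0 a1 a2 a3 a4 a5 a6 a7 a8 a9 a10 a11 a12 a13 a14 a15 + T16 b0 b1 b2 b3 b4 b5 b6 b7 b8 b9 b10 b11 b12 b13 b14 b15 =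
   T16 (a0 + b0) (a1 + b1) (a2 + b2) (a3 + b3) (a4 + b4) (a5 + b5) (a6 + b6) (a7 + b7)
     (a8 + b8) (a9 + b9) (a10 + b10) (a11 + b11) (a12 + b12) (a13 + b13) (a14 + b14) (a15 + b15)"
fun uminus_t16 :: "'a t16 \<Rightarrow> 'a t16" where
  "- T16 a0 a1 a2 a3 a4 a5 a6 a7 a8 a9 a10 a11 a12 a13 a14 a15 =
   T16 (- a0) (- a1) (- a2) (- a3) (- a4) (- a5) (- a6) (- a7) (- a8) (- a9) (- a10) (- a11) (- a12) (- a13) (- a14) (- a15)"
definition zero_t16 :: "'a t16" where
  "0 = T16 0 0 0 0 0 0 0 0 0 0 0 0 0 0 0 0"
definition minus_t16 :: "'a t16 \<Rightarrow> 'a t16 \<Rightarrow> 'a t16" where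
  "t - u = t + - (u :: 'a t16)"
instance
proof
  fix t u v :: "'a t16"
  show "t + u + v = t + (u + v)" by (cases t; cases u; cases v) (simp add: add.assoc)
  show "t + u = u + t" by (cases t; cases u) (simp add: add.commute)
  show "0 + t = t" by (cases t) (simp add: zero_t16_def)
  show "- t + t = 0" by (cases t) (simp add: zero_t16_def)
  show "t - u = t + - u" by (simp add: minus_t16_def)
qed
end

lemma sc_of_t16_add: "sc_of_t16 (t + u) = sc_of_t16 t + sc_of_t16 u"
  by (cases t; cases u) (simp add: sc_monom_add add_ac)

lemma sc_of_t16_uminus: "sc_of_t16 (- t) = - sc_of_t16 t"
  by (cases t) (simp add: sc_monom_uminus add_ac)

lemma sc_of_t16_diff: "sc_of_t16 (t - u) = sc_of_t16 t - sc_of_t16 u"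
  by (simp only: diff_conv_add_uminus sc_of_t16_add sc_of_t16_uminus)

lemma sc_of_t16_zero: "sc_of_t16 0 = 0"
  by (simp add: zero_t16_def)

lemma map_m2_sc_of_t16_mult: "map_m2 sc_of_t16 (A * B) = map_m2 sc_of_t16 A * map_m2 sc_of_t16 B"
  by (cases A; cases B) (simp add: sc_of_t16_mult sc_of_t16_add)

lemma map_m2_sc_of_t16_diff: "map_m2 sc_of_t16 (A - B) = map_m2 sc_of_t16 A - map_m2 sc_of_t16 B"
  by (cases A; cases B) (simp add: sc_of_t16_diff)

lemma map_m2_sc_of_t16_zero: "map_m2 sc_of_t16 0 = 0"
  by (simp add: zero_m2_eq sc_of_t16_zero)

definition t16_const :: "'a::zero \<Rightarrow> 'a t16" where
  "t16_const e = T16 e 0 0 0 0 0 0 0 0 0 0 0 0 0 0 0"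

definition t16_scalar :: "'a::ab_group_add \<Rightarrow> 'a t16 m2" where
  "t16_scalar e = M2 (t16_const e) 0 0 (t16_const e)"

definition t16_gen1 :: "'a::{ab_group_add, one} \<Rightarrow> 'a \<Rightarrow> 'a t16 m2" where
  "t16_gen1 x x' = M2 (t16_const x) (T16 0 1 0 0 0 0 0 0 0 0 0 0 0 0 0 0)
     (T16 0 0 1 0 0 0 0 0 0 0 0 0 0 0 0 0) (t16_const x')"

definition t16_gen2 :: "'a::{ab_group_add, one} \<Rightarrow> 'a \<Rightarrow> 'a t16 m2" where
  "t16_gen2 x x' = M2 (t16_const x) (T16 0 0 0 0 1 0 0 0 0 0 0 0 0 0 0 0)
     (T16 0 0 0 0 0 0 0 0 1 0 0 0 0 0 0 0) (t16_const x')"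

lemma sc_of_t16_const: "sc_of_t16 (t16_const e) = sc_scalar e"
  by (simp add: t16_const_def) (rule scc_eqI, simp add: coeffs_sc_monom coeffs_sc_scalar)

lemma sc_monom_singleton_one: "sc_monom {i} 1 = sc_y i"
  by (simp add: sc_monom_def sc_y_def)

lemma mscalar_model: "mscalar e = map_m2 sc_of_t16 (t16_scalar e)"
  by (simp add: mscalar_def t16_scalar_def sc_of_t16_const sc_of_t16_zero)

lemma C1_model: "C1 = map_m2 sc_of_t16 (t16_gen1 (xvar 0) (xvar 1))"
  and C2_model: "C2 = map_m2 sc_of_t16 (t16_gen2 (xvar 2) (xvar 3))"
  by (simp_all add: C1_def C2_def t16_gen1_def t16_gen2_def sc_of_t16_const sc_x_eq
      sc_monom_singleton_one)

lemmas model_hom = map_m2_sc_of_t16_mult[symmetric] map_m2_sc_of_t16_diff[symmetric]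
  map_m2_sc_of_t16_zero[symmetric]

lemmas model_calc = t16_scalar_def t16_gen1_def t16_gen2_def t16_const_def zero_t16_def
  zero_m2_eq minus_t16_def

section \<open>The basic commutators\<close>

definition gen_diff :: "nat \<Rightarrow> 'k::comm_ring_1 xpoly" where
  "gen_diff b = (if b = 1 then xvar 0 - xvar 1 else xvar 2 - xvar 3)"

definition comm12 :: "'k::comm_ring_1 sc m2" where
  "comm12 = mcomm C1 C2"

definition comm12_gen :: "nat \<Rightarrow> 'k::comm_ring_1 sc m2" where
  "comm12_gen b = mcomm comm12 (genC b)"

lemma genC_1 [simp]: "genC 1 = C1"
  and genC_2 [simp]: "genC 2 = C2"
  by (simp_all add: genC_def)

lemmas model_eqs = C1_model C2_model mscalar_model mcomm_def mmult_eq_times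

text \<open>The basic commutators in the model, with d1 = x1 - x1' and d2 = x2 - x2': comm12 has
  y1' y2 + y1 y2' on the diagonal and d1 y2 - d2 y1, d2 y1' - d1 y2' off it.\<close>

definition t16_comm12 :: "'a::comm_ring_1 \<Rightarrow> 'a \<Rightarrow> 'a t16 m2" where
  "t16_comm12 d1 d2 = M2
     (T16 0 0 0 0 0 0 1 0 0 1 0 0 0 0 0 0) (T16 0 (- d2) 0 0 d1 0 0 0 0 0 0 0 0 0 0 0)
     (T16 0 0 d2 0 0 0 0 0 (- d1) 0 0 0 0 0 0 0) (T16 0 0 0 0 0 0 1 0 0 1 0 0 0 0 0 0)"

definition t16_comm12_gen1 :: "'a::comm_ring_1 \<Rightarrow> 'a \<Rightarrow> 'a t16 m2" where
  "t16_comm12_gen1 d1 d2 = M2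
     (T16 0 0 0 (- 2 * d2) 0 0 (- d1) 0 0 d1 0 0 0 0 0 0) (T16 0 (d1 * d2) 0 0 (- d1 * d1) 0 0 0 0 0 0 0 0 0 0 0)
     (T16 0 0 (d1 * d2) 0 0 0 0 0 (- d1 * d1) 0 0 0 0 0 0 0) (T16 0 0 0 (- 2 * d2) 0 0 (- d1) 0 0 d1 0 0 0 0 0 0)"

definition t16_comm12_gen2 :: "'a::comm_ring_1 \<Rightarrow> 'a \<Rightarrow> 'a t16 m2" where
  "t16_comm12_gen2 d1 d2 = M2
     (T16 0 0 0 0 0 0 d2 0 0 (- d2) 0 0 (2 * d1) 0 0 0) (T16 0 (d2 * d2) 0 0 (- d1 * d2) 0 0 0 0 0 0 0 0 0 0 0)
     (T16 0 0 (d2 * d2) 0 0 0 0 0 (- d1 * d2) 0 0 0 0 0 0 0) (T16 0 0 0 0 0 0 d2 0 0 (- d2) 0 0 (2 * d1) 0 0 0)"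

lemmas t16_comms = t16_comm12_def t16_comm12_gen1_def t16_comm12_gen2_def

lemma comm12_model: "comm12 = map_m2 sc_of_t16 (t16_comm12 (gen_diff 1) (gen_diff 2))"
  unfolding comm12_def gen_diff_def
  by (simp only: if_True if_False simp_thms model_eqs model_hom)
    (simp add: model_calc t16_comms algebra_simps)

lemma comm12_gen_model:
  "comm12_gen 1 = map_m2 sc_of_t16 (t16_comm12_gen1 (gen_diff 1) (gen_diff 2))"
  "comm12_gen 2 = map_m2 sc_of_t16 (t16_comm12_gen2 (gen_diff 1) (gen_diff 2))"
  unfolding comm12_gen_def comm12_model genC_1 genC_2 gen_diff_def
  by (simp_all only: if_True if_False simp_thms model_eqs model_hom)
    (simp_all add: model_calc t16_comms algebra_simps)

lemma comm12_gen_commutator_cases: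
  "mcomm (comm12_gen 1) C1 = mscalar (gen_diff 1 * gen_diff 1) * comm12"
  "mcomm (comm12_gen 1) C2 = mscalar (gen_diff 1 * gen_diff 2) * comm12"
  "mcomm (comm12_gen 2) C1 = mscalar (gen_diff 2 * gen_diff 1) * comm12"
  "mcomm (comm12_gen 2) C2 = mscalar (gen_diff 2 * gen_diff 2) * comm12"
  by (simp_all only: comm12_gen_model comm12_model model_eqs model_hom)
    (simp_all add: model_calc t16_comms gen_diff_def algebra_simps)

lemma comm12_gen_commutator:
  "mcomm (comm12_gen i) (genC k) = mscalar (gen_diff i * gen_diff k) * comm12"
proof -
  have letter: "comm12_gen b = comm12_gen (if b = 1 then 1 else 2)"
    "genC b = genC (if b = 1 then 1 else 2)" "gen_diff b = gen_diff (if b = 1 then 1 else 2)" for b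
    by (simp_all add: comm12_gen_def genC_def gen_diff_def)
  show ?thesis
    unfolding letter[of i] letter[of k]
    by (cases "i = 1"; cases "k = 1")
      (simp_all only: if_True if_False simp_thms genC_1 genC_2 comm12_gen_commutator_cases)
qed

definition basic_comm :: "'k::comm_ring_1 sc m2 \<Rightarrow> bool" where
  "basic_comm X \<longleftrightarrow> X = comm12 \<or> X = comm12_gen 1 \<or> X = comm12_gen 2"

lemma basic_comm_comm12: "basic_comm comm12"
  and basic_comm_comm12_gen: "basic_comm (comm12_gen b)"
  by (auto simp: basic_comm_def comm12_gen_def genC_def)

lemma basic_comm_mult_comm12: "basic_comm X \<Longrightarrow> basic_comm Y \<Longrightarrow> X * Y * comm12 = 0"
  unfolding basic_comm_def
  by (elim disjE; simp only: comm12_model comm12_gen_model model_hom)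
    (simp_all add: model_calc t16_comms algebra_simps)

lemma basic_comm_mult_commutator:
  assumes "basic_comm X" "basic_comm Y"
  shows "mcomm (X * Y) C1 = 0" "mcomm (X * Y) C2 = 0"
  using assms unfolding basic_comm_def
  by (elim disjE; simp only: comm12_model comm12_gen_model model_eqs model_hom;
      simp add: model_calc t16_comms gen_diff_def algebra_simps)+

text \<open>The one linear relation between the two commutators of degree three that matters modulo
  the strongly commuting elements.\<close>

definition comm_balance :: "'k::comm_ring_1 sc m2" where
  "comm_balance = mscalar (gen_diff 2) * comm12_gen 1 - mscalar (gen_diff 1) * comm12_gen 2"

lemma comm_balance_mult_comm12: "comm_balance * comm12 = 0"
  unfolding comm_balance_def
  by (simp only: comm12_model comm12_gen_model model_eqs model_hom)
    (simp add: model_calc t16_comms algebra_simps)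

definition gen_diff_prod :: "nat list \<Rightarrow> 'k::comm_ring_1 xpoly" where
  "gen_diff_prod ws = prod_list (map gen_diff ws)"

lemma gen_diff_prod_simps [simp]:
  "gen_diff_prod [] = 1" "gen_diff_prod (ws @ [b]) = gen_diff_prod ws * gen_diff b"
  by (simp_all add: gen_diff_prod_def)

lemma gen_diff_prod_eq_counts:
  "set ws \<subseteq> {1, 2} \<Longrightarrow> gen_diff_prod ws = gen_diff 1 ^ count_list ws 1 * gen_diff 2 ^ count_list ws 2"
  by (induction ws) (auto simp: gen_diff_prod_def mult_ac)

lemma ucomm_eq_foldl: "ucomm ws = foldl (\<lambda>acc b. mcomm acc (genC b)) comm12 ws"
  by (simp add: ucomm_def comm12_def genC_def)

lemma foldl_mcomm_mscalar_comm12: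
  "foldl (\<lambda>acc b. mcomm acc (genC b)) (mscalar D * comm12) ws =
     (if even (length ws) then mscalar (D * gen_diff_prod ws) * comm12
      else mscalar (D * gen_diff_prod (butlast ws)) * comm12_gen (last ws))"
proof (induction ws rule: rev_induct)
  case (snoc b ws)
  show ?case
  proof (cases "even (length ws)")
    case True
    then show ?thesis using snoc by (simp add: mcomm_mscalar_mult comm12_gen_def)
  next
    case False
    then have "ws = butlast ws @ [last ws]" by (cases ws rule: rev_cases) auto
    then have "D * gen_diff_prod (butlast ws) * (gen_diff (last ws) * gen_diff b) = D * gen_diff_prod (ws @ [b])"
      by (metis gen_diff_prod_simps(2) mult.assoc)
    then show ?thesis
      using snoc False by (simp add: mcomm_mscalar_mult comm12_gen_commutator mscalar_mult_mscalar mult.assoc[symmetric])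
  qed
qed (simp add: mscalar_one_mult)

lemma finitary_comm12 [simp]: "pred_m2 finitary comm12"
  by (simp add: comm12_def mcomm_def)

lemma finitary_comm12_gen [simp]: "pred_m2 finitary (comm12_gen b)"
  by (simp add: comm12_gen_def mcomm_def)

lemma ucomm_eq:
  "ucomm ws = (if even (length ws) then mscalar (gen_diff_prod ws) * comm12
     else mscalar (gen_diff_prod (butlast ws)) * comm12_gen (last ws))"
  using foldl_mcomm_mscalar_comm12[of 1 ws] unfolding mult_1_left
  by (simp add: ucomm_eq_foldl mscalar_one_mult)

lemma ucomm_basic_comm: "\<exists>E X. basic_comm X \<and> ucomm ws = mscalar E * X"
  using ucomm_eq[of ws] basic_comm_comm12 basic_comm_comm12_gen by metis

section \<open>Strongly commuting elements\<close>

lemma commutes_with_algF: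
  assumes "pred_m2 finitary X" "mcomm X C1 = 0" "mcomm X C2 = 0" "b \<in> algF"
  shows "X * b = b * X"
  using assms(4)
proof (induction rule: algF.induct)
  case (smult a k)
  then show ?case by (simp add: msmult_eq mult_mscalar_mult mult.assoc)
next
  case (mult a b)
  then show ?case by (simp flip: mult.assoc) (simp add: mult.assoc)
qed (use assms in \<open>simp_all add: mone_mult mult_mone mcomm_def distrib_left distrib_right\<close>)

text \<open>Strong centrality without the requirement that X lie in F: X b is central in F for every b
  in F.\<close>

definition strongly_commuting :: "'k::comm_ring_1 sc m2 \<Rightarrow> bool" where
  "strongly_commuting X \<longleftrightarrow>
     pred_m2 finitary X \<and> (\<forall>b\<in>algF. mcomm (X * b) C1 = 0 \<and> mcomm (X * b) C2 = 0)"

lemma strongly_commuting_mult_commutes: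
  "strongly_commuting X \<Longrightarrow> b \<in> algF \<Longrightarrow> c \<in> algF \<Longrightarrow> X * b * c = c * (X * b)"
  unfolding strongly_commuting_def by (blast intro: commutes_with_algF finitary_matrix_mult)

lemma strongly_commuting_commutes:
  "strongly_commuting X \<Longrightarrow> c \<in> algF \<Longrightarrow> X * c = c * X"
  using strongly_commuting_mult_commutes[OF _ algF.one] mult_mone
  by (metis strongly_commuting_def)

text \<open>Induction on b, using [a b, C] = a [b, C] + [a, C] b and X a = a X.\<close>

lemma mult_mcomm_gen_eq_0:
  fixes X :: "'k::comm_ring_1 sc m2"
  assumes X: "pred_m2 finitary X" "mcomm X C1 = 0" "mcomm X C2 = 0" "X * comm12 = 0"
    and "b \<in> algF"
  shows "X * mcomm b C1 = 0 \<and> X * mcomm b C2 = 0"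
  using assms(5)
proof (induction rule: algF.induct)
  case one
  then show ?case by (simp add: mcomm_def mone_mult mult_mone)
next
  case gen1
  then show ?case using X(4) by (simp add: comm12_def)
next
  case gen2
  have "mcomm C2 C1 = (- comm12 :: 'k sc m2)" by (simp add: comm12_def mcomm_def)
  then show ?case using X(4) by simp
next
  case (smult a k)
  then show ?case by (simp add: msmult_eq mcomm_mscalar_mult mult_mscalar_mult)
next
  case (add a b)
  then show ?case by (simp add: mcomm_def distrib_left distrib_right algebra_simps)
next
  case (mult a b)
  have Xa: "X * a = a * X"
    using commutes_with_algF[OF X(1-3)] mult(1) by (simp add: algF_mult)
  have "mcomm (a * b) C = a * mcomm b C + mcomm a C * b" for C
    by (simp add: mcomm_def algebra_simps)
  then have "X * mcomm (a * b) C = a * (X * mcomm b C) + X * mcomm a C * b" for C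
    by (simp add: distrib_left) (simp only: mult.assoc[symmetric] Xa)
  then show ?case using mult by simp
qed

lemma strongly_commutingI:
  assumes "pred_m2 finitary X" "mcomm X C1 = 0" "mcomm X C2 = 0" "X * comm12 = 0"
  shows "strongly_commuting X"
proof -
  have "mcomm (X * b) C = X * mcomm b C" if "mcomm X C = 0" for b C
  proof -
    have "C * (X * b) = X * C * b"
      using that by (simp add: mcomm_def flip: mult.assoc)
    then show ?thesis by (simp add: mcomm_def right_diff_distrib mult.assoc)
  qed
  then show ?thesis
    using assms mult_mcomm_gen_eq_0[OF assms] by (simp add: strongly_commuting_def)
qed

lemma strongly_commuting_mult_right: "strongly_commuting X \<Longrightarrow> b \<in> algF \<Longrightarrow> strongly_commuting (X * b)"
  by (simp add: strongly_commuting_def mult.assoc algF_mult)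

lemma strongly_commuting_mult_left: "strongly_commuting X \<Longrightarrow> b \<in> algF \<Longrightarrow> strongly_commuting (b * X)"
  using strongly_commuting_commutes strongly_commuting_mult_right by metis

lemma strongly_commuting_zero: "strongly_commuting 0"
  and strongly_commuting_add: "strongly_commuting X \<Longrightarrow> strongly_commuting Y \<Longrightarrow> strongly_commuting (X + Y)"
  and strongly_commuting_uminus: "strongly_commuting X \<Longrightarrow> strongly_commuting (- X)"
  by (simp_all add: strongly_commuting_def mcomm_add_left mcomm_uminus_left distrib_right)

lemma strongly_commuting_sum: "(\<And>x. x \<in> S \<Longrightarrow> strongly_commuting (f x)) \<Longrightarrow> strongly_commuting (sum f S)"
  by (induction S rule: infinite_finite_induct) (auto simp: strongly_commuting_zero strongly_commuting_add)

lemma strongly_commuting_mscalar_mult: "strongly_commuting X \<Longrightarrow> strongly_commuting (mscalar e * X)"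
  by (simp add: strongly_commuting_def mult.assoc mcomm_mscalar_mult)

lemma strongly_commuting_msmult: "strongly_commuting X \<Longrightarrow> strongly_commuting (msmult k X)"
  by (simp add: msmult_eq strongly_commuting_mscalar_mult)

lemma strongly_commuting_basic_comm_mult:
  "basic_comm X \<Longrightarrow> basic_comm Y \<Longrightarrow> strongly_commuting (X * Y)"
  by (rule strongly_commutingI) (simp_all add: basic_comm_mult_comm12 basic_comm_mult_commutator)

lemma strongly_commuting_comm_balance: "strongly_commuting comm_balance"
proof (rule strongly_commutingI)
  have "mcomm comm_balance (genC k) = 0" for k
    by (simp add: comm_balance_def mcomm_diff_left mcomm_mscalar_mult comm12_gen_commutator
        mscalar_mult_mscalar flip: mult.assoc) (simp add: mult_ac)
  then show "mcomm comm_balance C1 = 0" "mcomm comm_balance C2 = 0"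
    using genC_1 genC_2 by metis+
  show "comm_balance * comm12 = 0" by (rule comm_balance_mult_comm12)
  show "pred_m2 finitary comm_balance"
    by (simp add: comm_balance_def comm12_gen_def mcomm_def)
qed

lemma length_eq_counts: "set (ws :: nat list) \<subseteq> {1, 2} \<Longrightarrow> length ws = count_list ws 1 + count_list ws 2"
  by (induction ws) auto

lemma count_list_butlast:
  "ws \<noteq> [] \<Longrightarrow> count_list ws a = count_list (butlast ws) a + (if last ws = a then 1 else 0)"
  by (induction ws rule: rev_induct) auto

text \<open>Commutators of the same multidegree coincide unless they have odd degree and end in different
  letters; then they differ by a multiple of comm_balance.\<close>

lemma ucomm_eq_of_counts:
  assumes "set w \<subseteq> {1, 2}" "set w' \<subseteq> {1, 2}"
    and counts: "count_list w 1 = count_list w' 1" "count_list w 2 = count_list w' 2"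
    and "even (length w) \<or> last w = last w'"
  shows "ucomm w = ucomm w'"
proof -
  have len: "length w = length w'"
    using length_eq_counts assms(1,2) counts by metis
  show ?thesis
  proof (cases "even (length w)")
    case True
    then show ?thesis
      using len assms by (simp add: ucomm_eq gen_diff_prod_eq_counts)
  next
    case False
    then have ne: "w \<noteq> []" "w' \<noteq> []" and last: "last w = last w'"
      using assms(5) len by auto
    have "set (butlast w) \<subseteq> {1, 2}" "set (butlast w') \<subseteq> {1, 2}"
      using assms(1,2) in_set_butlastD by fastforce+
    moreover have "count_list (butlast w) a = count_list (butlast w') a" if "a \<in> {1, 2}" for a
      using count_list_butlast[OF ne(1), of a] count_list_butlast[OF ne(2), of a] counts last that
      by auto
    ultimately show ?thesis
      using False len last by (simp add: ucomm_eq gen_diff_prod_eq_counts)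
  qed
qed

lemma ucomm_diff_of_last:
  assumes "set w \<subseteq> {1, 2}" "set w' \<subseteq> {1, 2}"
    and counts: "count_list w 1 = count_list w' 1" "count_list w 2 = count_list w' 2"
    and "odd (length w)" "last w = 1" "last w' = 2"
  shows "ucomm w - ucomm w' =
    mscalar (gen_diff 1 ^ (count_list w 1 - 1) * gen_diff 2 ^ (count_list w 2 - 1)) * comm_balance"
proof -
  have len: "length w = length w'"
    using length_eq_counts assms(1,2) counts by metis
  have ne: "w \<noteq> []" "w' \<noteq> []"
    using assms(5) len by auto
  have letters: "set (butlast w) \<subseteq> {1, 2}" "set (butlast w') \<subseteq> {1, 2}"
    using assms(1,2) in_set_butlastD by fastforce+
  define p q where "p = count_list (butlast w) 1" and "q = count_list (butlast w') 2"
  have cw: "count_list w a = count_list (butlast w) a + (if a = 1 then 1 else 0)"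
    and cw': "count_list w' a = count_list (butlast w') a + (if a = 2 then 1 else 0)" for a
    using count_list_butlast[OF ne(1), of a] count_list_butlast[OF ne(2), of a] assms(6,7) by auto
  have p: "count_list w 1 = Suc p" and q: "count_list w 2 = Suc q"
    using cw[of 1] cw'[of 2] counts by (simp_all add: p_def q_def)
  have "count_list (butlast w) 1 = p" "count_list (butlast w) 2 = Suc q"
    "count_list (butlast w') 1 = Suc p" "count_list (butlast w') 2 = q"
    using cw[of 2] cw'[of 1] counts p q by (simp_all add: p_def q_def)
  then have u: "ucomm w = mscalar (gen_diff 1 ^ p * gen_diff 2 ^ Suc q) * comm12_gen 1"
    and u': "ucomm w' = mscalar (gen_diff 1 ^ Suc p * gen_diff 2 ^ q) * comm12_gen 2"
    using assms(5-7) len letters by (simp_all add: ucomm_eq gen_diff_prod_eq_counts)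
  moreover have "count_list w 1 - 1 = p" "count_list w 2 - 1 = q"
    using p q by simp_all
  ultimately show ?thesis
    unfolding u u' by (simp add: comm_balance_def right_diff_distrib mscalar_mult_mscalar flip: mult.assoc)
      (simp add: mult_ac)
qed

lemma strongly_commuting_ucomm_diff:
  assumes "set w \<subseteq> {1, 2}" "set w' \<subseteq> {1, 2}"
    and "count_list w 1 = count_list w' 1" "count_list w 2 = count_list w' 2"
  shows "strongly_commuting (ucomm w - ucomm w' :: 'k::comm_ring_1 sc m2)"
proof (cases "even (length w) \<or> last w = last w'")
  case True
  then have "ucomm w = (ucomm w' :: 'k sc m2)" by (rule ucomm_eq_of_counts[OF assms])
  then show ?thesis by (simp add: strongly_commuting_zero)
next
  case False
  have "length w = length w'" using length_eq_counts assms by metis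
  then have "w \<noteq> []" "w' \<noteq> []" using False by auto
  then have "last w \<in> {1, 2}" "last w' \<in> {1, 2}" using assms(1,2) last_in_set by blast+
  with False consider "last w = 1" "last w' = 2" | "last w = 2" "last w' = 1" by auto
  then show ?thesis
  proof cases
    case 1
    then show ?thesis using False assms
      by (simp add: ucomm_diff_of_last strongly_commuting_mscalar_mult strongly_commuting_comm_balance)
  next
    case 2
    have "odd (length w')" using False \<open>length w = length w'\<close> by simp
    then have "strongly_commuting (ucomm w' - ucomm w :: 'k sc m2)"
      using 2 assms
      by (simp add: ucomm_diff_of_last strongly_commuting_mscalar_mult strongly_commuting_comm_balance)
    then show ?thesis using strongly_commuting_uminus[of "ucomm w' - ucomm w"] by simp
  qed
qed

lemma strongly_commuting_mprod_list:
  assumes "2 \<le> length ws"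
  shows "strongly_commuting (mprod_list (map ucomm ws) :: 'k::comm_ring_1 sc m2)"
proof -
  obtain w1 w2 r where ws: "ws = w1 # w2 # r"
    using assms by (cases ws; cases "tl ws") auto
  obtain E1 E2 :: "'k xpoly" and X1 X2 :: "'k sc m2" where X: "basic_comm X1" "basic_comm X2"
    and u: "ucomm w1 = mscalar E1 * X1" "ucomm w2 = mscalar E2 * X2"
    using ucomm_basic_comm[of w1] ucomm_basic_comm[of w2] by blast
  have "ucomm w1 * ucomm w2 = mscalar E1 * (X1 * (mscalar E2 * X2))"
    by (simp only: u mult.assoc)
  also have "\<dots> = mscalar E1 * (mscalar E2 * (X1 * X2))"
    by (simp only: mult_mscalar_mult[of X1])
  also have "\<dots> = mscalar (E1 * E2) * (X1 * X2)"
    by (simp only: mult.assoc[symmetric] mscalar_mult_mscalar)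
  finally have "mprod_list (map ucomm ws) = mscalar (E1 * E2) * (X1 * X2) * mprod_list (map ucomm r)"
    by (simp add: ws mprod_list_def flip: mult.assoc)
  moreover have "(mprod_list (map ucomm r) :: 'k sc m2) \<in> algF"
    by (rule algF_mprod_list) (auto simp: algF_ucomm)
  ultimately show ?thesis
    using X by (simp add: strongly_commuting_mult_right strongly_commuting_mscalar_mult
        strongly_commuting_basic_comm_mult)
qed

text \<open>Grouping the commutators by multidegree and replacing each by a fixed representative of its
  multidegree changes the combination only by a strongly commuting element.\<close>

lemma strongly_commuting_ucomm_combination:
  fixes w :: "nat \<Rightarrow> nat list" and \<beta> :: "nat \<Rightarrow> 'k::comm_ring_1"
  assumes "finite I" and letters: "\<And>i. i \<in> I \<Longrightarrow> set (w i) \<subseteq> {1, 2}"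
    and balanced: "\<And>i. i \<in> I \<Longrightarrow>
      (\<Sum>p\<in>{p\<in>I. deg1 (w p) = deg1 (w i) \<and> deg2 (w p) = deg2 (w i)}. \<beta> p) = 0"
  shows "strongly_commuting (\<Sum>i\<in>I. msmult (\<beta> i) (ucomm (w i)))"
proof -
  define deg where "deg i = (count_list (w i) 1, count_list (w i) 2)" for i
  define rep :: "nat \<times> nat \<Rightarrow> nat list" where "rep d = replicate (fst d) 1 @ replicate (snd d) 2" for d
  have rep: "set (rep d) \<subseteq> {1, 2}" "count_list (rep d) 1 = fst d" "count_list (rep d) 2 = snd d" for d
    by (auto simp: rep_def count_list_eq_length_filter)
  have "(\<Sum>i\<in>I. msmult (\<beta> i) (ucomm (w i))) =
      (\<Sum>i\<in>I. msmult (\<beta> i) (ucomm (w i) - ucomm (rep (deg i)))) +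
      (\<Sum>i\<in>I. msmult (\<beta> i) (ucomm (rep (deg i))))"
    by (simp add: msmult_eq right_diff_distrib flip: sum.distrib)
  moreover have "strongly_commuting (\<Sum>i\<in>I. msmult (\<beta> i) (ucomm (w i) - ucomm (rep (deg i))))"
    using letters rep
    by (intro strongly_commuting_sum strongly_commuting_msmult strongly_commuting_ucomm_diff)
      (auto simp: deg_def)
  moreover have "(\<Sum>i\<in>I. msmult (\<beta> i) (ucomm (rep (deg i)))) = 0"
  proof -
    have "(\<Sum>i\<in>I. msmult (\<beta> i) (ucomm (rep (deg i)))) =
        (\<Sum>d\<in>deg ` I. mscalar (xconst (\<Sum>i\<in>{i\<in>I. deg i = d}. \<beta> i)) * ucomm (rep d))"
      by (subst sum.image_gen[OF \<open>finite I\<close>])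
        (auto simp: msmult_eq xconst_sum mscalar_sum sum_distrib_right intro!: sum.cong)
    also have "\<dots> = 0"
    proof (rule sum.neutral, rule ballI)
      fix d assume "d \<in> deg ` I"
      then obtain i where i: "i \<in> I" "d = deg i" by auto
      then have "{p\<in>I. deg p = d} = {p\<in>I. deg1 (w p) = deg1 (w i) \<and> deg2 (w p) = deg2 (w i)}"
        by (auto simp: deg_def deg1_def deg2_def)
      then show "mscalar (xconst (\<Sum>i\<in>{i\<in>I. deg i = d}. \<beta> i)) * ucomm (rep d) = 0"
        using balanced[OF i(1)] by simp
    qed
    finally show ?thesis .
  qed
  ultimately show ?thesis by (simp add: strongly_commuting_zero)
qed

definition xmonom_eval :: "(nat \<Rightarrow> 'k::comm_ring_1) \<Rightarrow> (nat \<Rightarrow>\<^sub>0 nat) \<Rightarrow> 'k" where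
  "xmonom_eval v m = (\<Prod>i\<in>Poly_Mapping.keys m. v i ^ Poly_Mapping.lookup m i)"

definition xpoly_eval :: "(nat \<Rightarrow> 'k::comm_ring_1) \<Rightarrow> 'k xpoly \<Rightarrow> 'k" where
  "xpoly_eval v p = (\<Sum>m\<in>Poly_Mapping.keys p. Poly_Mapping.lookup p m * xmonom_eval v m)"

lemma xmonom_eval_superset:
  assumes "finite K" "Poly_Mapping.keys m \<subseteq> K"
  shows "xmonom_eval v m = (\<Prod>i\<in>K. v i ^ Poly_Mapping.lookup m i)"
  unfolding xmonom_eval_def
  by (rule prod.mono_neutral_left) (use assms in \<open>auto simp: in_keys_iff\<close>)

lemma xmonom_eval_add: "xmonom_eval v (m1 + m2) = xmonom_eval v m1 * xmonom_eval v m2"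
proof -
  let ?K = "Poly_Mapping.keys m1 \<union> Poly_Mapping.keys m2"
  have "Poly_Mapping.keys (m1 + m2) \<subseteq> ?K" by (rule Poly_Mapping.keys_add)
  then show ?thesis
    using xmonom_eval_superset[of ?K "m1 + m2" v] xmonom_eval_superset[of ?K m1 v]
      xmonom_eval_superset[of ?K m2 v]
    by (simp add: lookup_add power_add prod.distrib)
qed

lemma xpoly_eval_superset:
  assumes "finite A" "Poly_Mapping.keys p \<subseteq> A"
  shows "xpoly_eval v p = (\<Sum>m\<in>A. Poly_Mapping.lookup p m * xmonom_eval v m)"
  unfolding xpoly_eval_def
  by (rule sum.mono_neutral_left) (use assms in \<open>auto simp: in_keys_iff\<close>)

lemma xpoly_eval_add: "xpoly_eval v (p + q) = xpoly_eval v p + xpoly_eval v q"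
proof -
  let ?K = "Poly_Mapping.keys p \<union> Poly_Mapping.keys q"
  have "Poly_Mapping.keys (p + q) \<subseteq> ?K" by (rule keys_add)
  then show ?thesis
    using xpoly_eval_superset[of ?K "p + q" v] xpoly_eval_superset[of ?K p v]
      xpoly_eval_superset[of ?K q v]
    by (simp add: lookup_add algebra_simps sum.distrib)
qed

lemma xpoly_eval_zero [simp]: "xpoly_eval v 0 = 0"
  by (simp add: xpoly_eval_def)

lemma xpoly_eval_uminus: "xpoly_eval v (- p) = - xpoly_eval v p"
  using xpoly_eval_add[of v "- p" p] by (simp add: xpoly_eval_def eq_neg_iff_add_eq_0)

lemma xpoly_eval_diff: "xpoly_eval v (p - q) = xpoly_eval v p - xpoly_eval v q"
  using xpoly_eval_add[of v p "- q"] xpoly_eval_uminus[of v q] by simp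

lemma xpoly_eval_sum: "xpoly_eval v (sum f A) = (\<Sum>x\<in>A. xpoly_eval v (f x))"
  by (induction A rule: infinite_finite_induct) (auto simp: xpoly_eval_add)

lemma xpoly_eval_single: "xpoly_eval v (Poly_Mapping.single m c) = c * xmonom_eval v m"
  using xpoly_eval_superset[of "{m}" "Poly_Mapping.single m c" v] by simp

lemma xpoly_eval_mult: "xpoly_eval v (p * q) = xpoly_eval v p * xpoly_eval v q"
proof -
  have expand: "r = (\<Sum>m\<in>Poly_Mapping.keys r. Poly_Mapping.single m (Poly_Mapping.lookup r m))"
    for r :: "'a xpoly"
    by (rule poly_mapping_eqI) (simp add: lookup_sum lookup_single when_def sum.delta' in_keys_iff)
  have "p * q = (\<Sum>m\<in>Poly_Mapping.keys p. \<Sum>m'\<in>Poly_Mapping.keys q.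
      Poly_Mapping.single m (Poly_Mapping.lookup p m) * Poly_Mapping.single m' (Poly_Mapping.lookup q m'))"
    by (subst expand[of p], subst expand[of q]) (rule sum_product)
  then have "xpoly_eval v (p * q) = (\<Sum>m\<in>Poly_Mapping.keys p. \<Sum>m'\<in>Poly_Mapping.keys q.
      (Poly_Mapping.lookup p m * xmonom_eval v m) * (Poly_Mapping.lookup q m' * xmonom_eval v m'))"
    by (simp add: xpoly_eval_sum mult_single xpoly_eval_single xmonom_eval_add mult_ac)
  also have "\<dots> = xpoly_eval v p * xpoly_eval v q"
    by (simp add: xpoly_eval_def sum_product)
  finally show ?thesis .
qed

lemma xpoly_eval_xvar [simp]: "xpoly_eval v (xvar i) = v i"
  and xpoly_eval_xconst [simp]: "xpoly_eval v (xconst c) = c"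
  by (simp_all add: xvar_def xconst_def xpoly_eval_single xmonom_eval_def)

lemma xpoly_eval_one [simp]: "xpoly_eval v 1 = 1"
  using xpoly_eval_xconst[of v 1] by simp

lemma xpoly_eval_power: "xpoly_eval v (p ^ n) = xpoly_eval v p ^ n"
  by (induction n) (auto simp: xpoly_eval_mult simp flip: xconst_one)

lemmas xpoly_eval_simps = xpoly_eval_add xpoly_eval_diff xpoly_eval_uminus xpoly_eval_sum
  xpoly_eval_mult xpoly_eval_power

lemma xvar_diff_neq_0:
  assumes "i \<noteq> j"
  shows "xvar i - xvar j \<noteq> (0 :: 'k::comm_ring_1 xpoly)"
proof
  assume "xvar i - xvar j = (0 :: 'k xpoly)"
  then have "xpoly_eval (\<lambda>k. if k = i then 1 else 0) (xvar i - xvar j :: 'k xpoly) = 0"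
    by (simp add: xpoly_eval_def)
  then show False using assms by (simp add: xpoly_eval_diff)
qed

lemma xconst_eq_0_iff [simp]: "xconst c = 0 \<longleftrightarrow> c = 0"
  by (metis xpoly_eval_xconst xpoly_eval_zero xconst_zero)

lemma xpoly_eval_gen_diff_prod:
  "set w \<subseteq> {1, 2} \<Longrightarrow>
    xpoly_eval v (gen_diff_prod w) = (v 0 - v 1) ^ count_list w 1 * (v 2 - v 3) ^ count_list w 2"
  by (simp add: gen_diff_prod_eq_counts gen_diff_def xpoly_eval_simps)

lemma sum_powers_eq_0_imp:
  fixes c :: "'t \<Rightarrow> 'k::field"
  assumes "finite T" "infinite (UNIV :: 'k set)" "\<And>x. (\<Sum>t\<in>T. c t * x ^ e t) = 0"
  shows "(\<Sum>t\<in>{t\<in>T. e t = k}. c t) = 0"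
proof -
  define P where "P = (\<Sum>t\<in>T. monom (c t) (e t))"
  have "poly P x = 0" for x
    using assms(3) by (simp add: P_def poly_sum poly_monom)
  then have "{x. poly P x = 0} = UNIV" by auto
  then have "P = 0"
    using assms(2) poly_roots_finite[of P] by auto
  then have "coeff P k = 0" by simp
  then show ?thesis
    using assms(1) by (simp add: P_def coeff_sum coeff_monom sum.inter_filter)
qed

text \<open>Terms are indexed by a finite set T, term t having exponent e t i at the variable i; several
  terms may share a monomial, and it is the sum of their coefficients that vanishes.\<close>

lemma sum_monomials_eq_0_imp:
  fixes g :: "'t \<Rightarrow> 'k::field" and e :: "'t \<Rightarrow> nat \<Rightarrow> nat" and n :: nat
  assumes "infinite (UNIV :: 'k set)"
  shows "finite T \<Longrightarrow> \<forall>x. (\<Sum>t\<in>T. g t * (\<Prod>i<n. x i ^ e t i)) = 0 \<Longrightarrow>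
    (\<Sum>t\<in>{t\<in>T. \<forall>i<n. e t i = k i}. g t) = 0"
proof (induction n arbitrary: T)
  case 0
  then show ?case by simp
next
  case (Suc n)
  define T' where "T' = {t\<in>T. e t n = k n}"
  have "(\<Sum>t\<in>T'. g t * (\<Prod>i<n. x i ^ e t i)) = 0" for x
  proof -
    have "(\<Sum>t\<in>T. (g t * (\<Prod>i<n. x i ^ e t i)) * z ^ e t n) = 0" for z
    proof -
      have "(\<Prod>i<n. (x(n := z)) i ^ e t i) = (\<Prod>i<n. x i ^ e t i)" for t
        by (rule prod.cong) auto
      then show ?thesis
        using spec[OF Suc.prems(2), of "x(n := z)"] by (simp add: mult.assoc)
    qed
    from sum_powers_eq_0_imp[OF Suc.prems(1) assms this] show ?thesis
      by (simp add: T'_def)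
  qed
  then have "\<forall>x. (\<Sum>t\<in>T'. g t * (\<Prod>i<n. x i ^ e t i)) = 0" by blast
  from Suc.IH[OF _ this] have "(\<Sum>t\<in>{t\<in>T'. \<forall>i<n. e t i = k i}. g t) = 0"
    using Suc.prems(1) by (simp add: T'_def)
  moreover have "{t\<in>T'. \<forall>i<n. e t i = k i} = {t\<in>T. \<forall>i<Suc n. e t i = k i}"
    by (auto simp: T'_def less_Suc_eq)
  ultimately show ?case by simp
qed

section \<open>Components of low degree in the odd variables\<close>

definition ydeg_ge1 :: "'a::comm_ring_1 scc m2 \<Rightarrow> bool" where
  "ydeg_ge1 A \<longleftrightarrow> (\<forall>x\<in>set_m2 A. coeffs x {} = 0)"

definition ydeg_ge2 :: "'a::comm_ring_1 scc m2 \<Rightarrow> bool" where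
  "ydeg_ge2 A \<longleftrightarrow> (\<forall>x\<in>set_m2 A. coeffs x {} = 0 \<and> (\<forall>i. coeffs x {i} = 0))"

lemma ydeg_ge1_mult_right: "ydeg_ge1 B \<Longrightarrow> ydeg_ge1 (A * B)"
  and ydeg_ge2_mult: "ydeg_ge1 A \<Longrightarrow> ydeg_ge1 B \<Longrightarrow> ydeg_ge2 (A * B)"
  and ydeg_ge2_mult_left: "ydeg_ge2 A \<Longrightarrow> ydeg_ge2 (A * B)"
  and ydeg_ge2_mult_right: "ydeg_ge2 B \<Longrightarrow> ydeg_ge2 (A * B)"
  by (cases A; cases B; simp add: ydeg_ge1_def ydeg_ge2_def coeffs_mult_empty coeffs_mult_singleton)+

lemma ydeg_ge1_add: "ydeg_ge1 A \<Longrightarrow> ydeg_ge1 B \<Longrightarrow> ydeg_ge1 (A + B)"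
  and ydeg_ge2_add: "ydeg_ge2 A \<Longrightarrow> ydeg_ge2 B \<Longrightarrow> ydeg_ge2 (A + B)"
  by (cases A; cases B; simp add: ydeg_ge1_def ydeg_ge2_def)+

lemma ydeg_ge1_zero: "ydeg_ge1 0"
  and ydeg_ge2_zero: "ydeg_ge2 0"
  by (simp_all add: ydeg_ge1_def ydeg_ge2_def zero_m2_eq)

lemma ydeg_ge1_sum: "(\<And>x. x \<in> S \<Longrightarrow> ydeg_ge1 (f x)) \<Longrightarrow> ydeg_ge1 (sum f S)"
  by (induction S rule: infinite_finite_induct) (simp_all add: ydeg_ge1_zero ydeg_ge1_add)

lemma ydeg_ge2_sum: "(\<And>x. x \<in> S \<Longrightarrow> ydeg_ge2 (f x)) \<Longrightarrow> ydeg_ge2 (sum f S)"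
  by (induction S rule: infinite_finite_induct) (simp_all add: ydeg_ge2_zero ydeg_ge2_add)

lemma ydeg_ge1_msmult: "ydeg_ge1 A \<Longrightarrow> ydeg_ge1 (msmult k A)"
  and ydeg_ge2_msmult: "ydeg_ge2 A \<Longrightarrow> ydeg_ge2 (msmult k A)"
  by (simp_all add: msmult_eq ydeg_ge1_mult_right ydeg_ge2_mult_right)

lemma ydeg_ge1_coeffs: "ydeg_ge1 A \<Longrightarrow> coeffs (m11 A) {} = 0 \<and> coeffs (m12 A) {} = 0 \<and> coeffs (m22 A) {} = 0"
  and ydeg_ge2_coeffs: "ydeg_ge2 A \<Longrightarrow> coeffs (m11 A) {} = 0 \<and> coeffs (m22 A) {} = 0 \<and> coeffs (m12 A) {i} = 0"
  by (cases A; simp add: ydeg_ge1_def ydeg_ge2_def)+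

lemma coeffs_diag_mscalar_mult:
  "coeffs (m11 (mscalar e * X)) {} = e * coeffs (m11 X) {}"
  "coeffs (m22 (mscalar e * X)) {} = e * coeffs (m22 X) {}"
  by (cases X; simp add: mscalar_def coeffs_sc_scalar_mult)+

lemma coeffs_m12_mult_ydeg_ge1:
  assumes "ydeg_ge1 S" "coeffs (m12 P) {} = 0"
  shows "coeffs (m12 (P * S)) {2} = coeffs (m11 P) {} * coeffs (m12 S) {2}"
  using assms by (simp add: entries_mult coeffs_mult_singleton ydeg_ge1_coeffs)

lemma ydeg_ge1_basic_comm: "basic_comm X \<Longrightarrow> ydeg_ge1 X"
  unfolding basic_comm_def ydeg_ge1_def comm12_model comm12_gen_model t16_comms
  by (auto simp: coeffs_sc_monom)

lemma ydeg_ge1_ucomm: "ydeg_ge1 (ucomm w)"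
  using ucomm_basic_comm[of w] ydeg_ge1_basic_comm ydeg_ge1_mult_right by metis

lemma ydeg_ge2_mprod_list:
  assumes "2 \<le> length ws"
  shows "ydeg_ge2 (mprod_list (map ucomm ws))"
proof -
  obtain w1 w2 r where "ws = w1 # w2 # r"
    using assms by (cases ws; cases "tl ws") auto
  then show ?thesis
    by (simp add: mprod_list_def ydeg_ge1_ucomm ydeg_ge2_mult_left ydeg_ge2_mult flip: mult.assoc)
qed

lemma coeffs_m12_mscalar_mult:
  "pred_m2 finitary X \<Longrightarrow> coeffs (m12 (mscalar e * X)) {2} = e * coeffs (m12 X) {2}"
  by (cases X) (simp add: mscalar_def coeffs_sc_scalar_mult finitary_def)

lemma coeffs_m12_comm12: "coeffs (m12 comm12) {2} = gen_diff 1"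
  and coeffs_m12_comm12_gen1: "coeffs (m12 (comm12_gen 1)) {2} = - (gen_diff 1 * gen_diff 1)"
  and coeffs_m12_comm12_gen2: "coeffs (m12 (comm12_gen 2)) {2} = - (gen_diff 2 * gen_diff 1)"
  unfolding comm12_model comm12_gen_model t16_comms by (simp_all add: coeffs_sc_monom)

lemma coeffs_m12_ucomm:
  "coeffs (m12 (ucomm w :: 'k::comm_ring_1 sc m2)) {2} = (-1) ^ length w * gen_diff_prod w * gen_diff 1"
proof (cases "even (length w)")
  case True
  then show ?thesis by (simp add: ucomm_eq coeffs_m12_mscalar_mult coeffs_m12_comm12)
next
  case False
  then have "w = butlast w @ [last w]" by (cases w rule: rev_cases) auto
  then have "gen_diff_prod w = (gen_diff_prod (butlast w) * gen_diff (last w) :: 'k xpoly)"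
    by (metis gen_diff_prod_simps(2))
  moreover have "coeffs (m12 (comm12_gen b :: 'k sc m2)) {2} = - (gen_diff b * gen_diff 1)" for b
    using coeffs_m12_comm12_gen1 coeffs_m12_comm12_gen2
    by (cases "b = 1") (simp_all add: comm12_gen_def genC_def gen_diff_def)
  ultimately show ?thesis
    using False by (simp add: ucomm_eq coeffs_m12_mscalar_mult algebra_simps)
qed

lemma coeffs_mpow_low:
  assumes "coeffs (m12 A) {} = 0" "coeffs (m21 A) {} = 0"
  shows "coeffs (m11 (mpow A n)) {} = coeffs (m11 A) {} ^ n \<and> coeffs (m12 (mpow A n)) {} = 0 \<and>
    coeffs (m21 (mpow A n)) {} = 0 \<and> coeffs (m22 (mpow A n)) {} = coeffs (m22 A) {} ^ n"
  by (induction n) (simp_all add: assms entries_mult coeffs_mult_empty mone_def sc_const_eq coeffs_sc_scalar)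

lemma coeffs_monomial_low:
  "coeffs (m11 (mpow C1 n * mpow C2 m :: 'k::comm_ring_1 sc m2)) {} = xvar 0 ^ n * xvar 2 ^ m"
  "coeffs (m12 (mpow C1 n * mpow C2 m :: 'k sc m2)) {} = 0"
  "coeffs (m22 (mpow C1 n * mpow C2 m :: 'k sc m2)) {} = xvar 1 ^ n * xvar 3 ^ m"
proof -
  have low: "coeffs (m12 (C1 :: 'k sc m2)) {} = 0" "coeffs (m21 (C1 :: 'k sc m2)) {} = 0" "coeffs (m12 (C2 :: 'k sc m2)) {} = 0"
    "coeffs (m21 (C2 :: 'k sc m2)) {} = 0" "coeffs (m11 (C1 :: 'k sc m2)) {} = xvar 0"
    "coeffs (m22 (C1 :: 'k sc m2)) {} = xvar 1" "coeffs (m11 (C2 :: 'k sc m2)) {} = xvar 2"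
    "coeffs (m22 (C2 :: 'k sc m2)) {} = xvar 3"
    by (simp_all add: C1_def C2_def sc_x_eq coeffs_sc_scalar sc_y_def)
  with coeffs_mpow_low[OF low(1,2), of n] coeffs_mpow_low[OF low(3,4), of m] show
    "coeffs (m11 (mpow C1 n * mpow C2 m :: 'k sc m2)) {} = xvar 0 ^ n * xvar 2 ^ m"
    "coeffs (m12 (mpow C1 n * mpow C2 m :: 'k sc m2)) {} = 0"
    "coeffs (m22 (mpow C1 n * mpow C2 m :: 'k sc m2)) {} = xvar 1 ^ n * xvar 3 ^ m"
    by (simp_all add: entries_mult coeffs_mult_empty)
qed

lemma gen_diff_neq_0: "gen_diff b \<noteq> (0 :: 'k::comm_ring_1 xpoly)"
  using xvar_diff_neq_0[where 'k='k, of 0 1] xvar_diff_neq_0[where 'k='k, of 2 3]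
  by (simp add: gen_diff_def)

text \<open>Read off from the entry (1,2) of f C1 - C1 f at y1 and y2 and of f C2 - C2 f at y1.\<close>

lemma central_coeffs_low:
  fixes f :: "'k::idom sc m2"
  assumes "f * C1 = C1 * f" "f * C2 = C2 * f"
  shows "coeffs (m12 f) {2} = 0" "coeffs (m11 f) {} = coeffs (m22 f) {}"
proof -
  obtain a b c d where f: "f = M2 a b c d" by (cases f)
  have E1: "a * sc_y 0 + b * sc_x 1 = sc_x 0 * b + sc_y 0 * d"
    using assms(1) by (simp add: f C1_def)
  have E2: "a * sc_y 2 + b * sc_x 3 = sc_x 2 * b + sc_y 2 * d"
    using assms(2) by (simp add: f C2_def)
  have coeffs_gens: "coeffs (sc_x i) S = (if S = {} then xvar i else 0)"
    "coeffs (sc_y i) S = (if S = {i} then 1 else 0)" for i S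
    by (simp_all add: sc_x_eq coeffs_sc_scalar sc_y_def)
  have q0: "coeffs a {} + coeffs b {0} * xvar 1 = xvar 0 * coeffs b {0} + coeffs d {}"
    using arg_cong[OF E1, of "\<lambda>x. coeffs x {0}"] by (simp add: coeffs_mult_singleton coeffs_gens)
  have q2: "coeffs b {2} * xvar 1 = xvar 0 * coeffs b {2}"
    using arg_cong[OF E1, of "\<lambda>x. coeffs x {2}"] by (simp add: coeffs_mult_singleton coeffs_gens)
  have q0': "coeffs b {0} * xvar 3 = xvar 2 * coeffs b {0}"
    using arg_cong[OF E2, of "\<lambda>x. coeffs x {0}"] by (simp add: coeffs_mult_singleton coeffs_gens)
  have "coeffs b {2} * (xvar 0 - xvar 1) = 0" "coeffs b {0} * (xvar 2 - xvar 3) = 0"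
    by (simp_all only: right_diff_distrib q2 q0') (simp_all add: mult.commute)
  then have "coeffs b {2} = 0" "coeffs b {0} = 0"
    using xvar_diff_neq_0[where 'k='k, of 0 1] xvar_diff_neq_0[where 'k='k, of 2 3] by auto
  then show "coeffs (m12 f) {2} = 0" "coeffs (m11 f) {} = coeffs (m22 f) {}"
    using q0 by (simp_all add: f)
qed

lemma central_mscalar_plus:
  assumes "strongly_commuting Z" "mscalar e + Z \<in> algF"
  shows "central_F (mscalar e + Z)"
  using assms strongly_commuting_commutes[OF assms(1)]
  by (simp add: central_F_def distrib_left distrib_right mscalar_mult_commute)

lemma mscalar_mult_comm12_eq_0:
  fixes e :: "'k::idom xpoly"
  assumes "mscalar e * comm12 = 0"
  shows "e = 0"
proof -
  have "e * gen_diff 1 = 0"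
    using arg_cong[OF assms, of "\<lambda>A. coeffs (m12 A) {2}"]
    by (simp add: coeffs_m12_mscalar_mult coeffs_m12_comm12 zero_m2_eq)
  then show ?thesis using gen_diff_neq_0 mult_eq_0_iff by blast
qed

lemma strongly_central_mscalar_plus_iff:
  fixes Z :: "'k::idom sc m2"
  assumes Z: "strongly_commuting Z" and "mscalar (xconst a) + Z \<in> algF"
  shows "strongly_central_F (mscalar (xconst a) + Z) \<longleftrightarrow> a = 0"
proof
  let ?e = "xconst a :: 'k xpoly"
  assume "strongly_central_F (mscalar ?e + Z)"
  then have "central_F ((mscalar ?e + Z) * C1)"
    using algF.gen1 unfolding strongly_central_F_def by auto
  then have "(mscalar ?e + Z) * C1 * C2 = C2 * ((mscalar ?e + Z) * C1)"
    using algF.gen2 unfolding central_F_def by auto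
  moreover have "Z * C1 * C2 = C2 * (Z * C1)"
    using strongly_commuting_mult_commutes[OF Z algF.gen1 algF.gen2] .
  ultimately have "mscalar ?e * C1 * C2 = C2 * (mscalar ?e * C1)"
    by (simp add: distrib_left distrib_right)
  then have "mscalar ?e * comm12 = 0"
    by (simp add: comm12_def mcomm_def right_diff_distrib mult.assoc mult_mscalar_mult)
  then have "?e = 0" by (rule mscalar_mult_comm12_eq_0)
  then show "a = 0" by simp
next
  assume "a = 0"
  have "central_F (Z * b)" if "b \<in> algF" for b
    using that assms \<open>a = 0\<close> strongly_commuting_mult_commutes[OF Z that]
    by (simp add: central_F_def algF_mult)
  then show "strongly_central_F (mscalar (xconst a) + Z)"
    using central_mscalar_plus[OF assms] \<open>a = 0\<close> by (simp add: strongly_central_F_def)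
qed

locale presented_element =
  fixes \<alpha> :: "nat \<Rightarrow> nat \<Rightarrow> 'k::field" and N :: nat
    and J :: "nat set" and nj mj :: "nat \<Rightarrow> nat"
    and Idx :: "nat \<Rightarrow> nat set" and \<beta> :: "nat \<Rightarrow> nat \<Rightarrow> 'k" and u :: "nat \<Rightarrow> nat \<Rightarrow> nat list"
    and G :: "nat set" and \<gamma> :: "nat \<Rightarrow> 'k" and ga gb :: "nat \<Rightarrow> nat"
    and gu :: "nat \<Rightarrow> nat list list"
  assumes K_infinite: "infinite (UNIV :: 'k set)"
    and \<alpha>_supp: "\<And>n m. N < n \<or> N < m \<Longrightarrow> \<alpha> n m = 0"
    and J_fin: "finite J"
    and J_distinct: "inj_on (\<lambda>j. (nj j, mj j)) J"
    and Idx_fin: "\<And>j. j \<in> J \<Longrightarrow> finite (Idx j)"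
    and u_letters: "\<And>i j. j \<in> J \<Longrightarrow> i \<in> Idx j \<Longrightarrow> set (u i j) \<subseteq> {1, 2}"
    and gu_len: "\<And>k. k \<in> G \<Longrightarrow> 2 \<le> length (gu k)"
begin

definition alpha_part :: "'k sc m2" where
  "alpha_part = (\<Sum>(n, m)\<in>{..N} \<times> {..N}. msmult (\<alpha> n m) (mmult (mpow C1 n) (mpow C2 m)))"

definition beta_comb :: "nat \<Rightarrow> 'k sc m2" where
  "beta_comb j = (\<Sum>i\<in>Idx j. msmult (\<beta> i j) (ucomm (u i j)))"

definition beta_part :: "'k sc m2" where
  "beta_part = (\<Sum>j\<in>J. mmult (mmult (mpow C1 (nj j)) (mpow C2 (mj j))) (beta_comb j))"

definition gamma_part :: "'k sc m2" where
  "gamma_part = (\<Sum>k\<in>G. msmult (\<gamma> k) (mmult (mmult (mpow C1 (ga k)) (mpow C2 (gb k)))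
     (mprod_list (map ucomm (gu k)))))"

definition same_degree :: "nat \<Rightarrow> nat \<Rightarrow> nat set" where
  "same_degree j i = {p\<in>Idx j. deg1 (u p j) = deg1 (u i j) \<and> deg2 (u p j) = deg2 (u i j)}"

definition alpha_cond :: bool where
  "alpha_cond \<longleftrightarrow> (\<forall>n m. 1 \<le> n + m \<longrightarrow> \<alpha> n m = 0)"

definition beta_cond :: bool where
  "beta_cond \<longleftrightarrow> (\<forall>j\<in>J. \<forall>i\<in>Idx j. (\<Sum>p\<in>same_degree j i. \<beta> p j) = 0)"

abbreviation elem :: "'k sc m2" where
  "elem \<equiv> alpha_part + beta_part + gamma_part"

lemma algF_monomial: "mpow C1 n * mpow C2 m \<in> algF"
  by (simp add: algF_mult algF_mpow algF.gen1 algF.gen2)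

lemma algF_alpha_part: "alpha_part \<in> algF"
  unfolding alpha_part_def by (rule algF_sum) (auto intro: algF.smult algF_monomial)

lemma algF_beta_part: "beta_part \<in> algF"
  unfolding beta_part_def beta_comb_def
  by (intro algF_sum algF.mult algF_mpow algF.gen1 algF.gen2 algF.smult algF_ucomm)

lemma algF_gamma_part: "gamma_part \<in> algF"
  unfolding gamma_part_def
  by (intro algF_sum algF.mult algF_mpow algF.gen1 algF.gen2 algF.smult algF_mprod_list)
    (auto simp: algF_ucomm)

lemma algF_elem: "elem \<in> algF"
  by (intro algF.add algF_alpha_part algF_beta_part algF_gamma_part)

lemma strongly_commuting_gamma_part: "strongly_commuting gamma_part"
  unfolding gamma_part_def
  by (auto intro!: strongly_commuting_sum strongly_commuting_msmult strongly_commuting_mult_left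
      strongly_commuting_mprod_list algF_monomial gu_len)

lemma strongly_commuting_beta_part:
  assumes beta_cond
  shows "strongly_commuting beta_part"
  unfolding beta_part_def mmult_eq_times
proof (intro strongly_commuting_sum strongly_commuting_mult_left[OF _ algF_monomial])
  fix j assume "j \<in> J"
  with assms show "strongly_commuting (beta_comb j)"
    unfolding beta_comb_def beta_cond_def same_degree_def
    by (intro strongly_commuting_ucomm_combination Idx_fin u_letters) auto
qed

lemma alpha_part_eq: "alpha_cond \<Longrightarrow> alpha_part = mscalar (xconst (\<alpha> 0 0))"
proof -
  assume alpha_cond
  have "msmult (\<alpha> n m) (mmult (mpow C1 n) (mpow C2 m)) =
      (if (n, m) = (0, 0) then mscalar (xconst (\<alpha> 0 0)) else 0)" for n m
  proof (cases "n + m = 0")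
    case False
    then have "\<alpha> n m = 0" using \<open>alpha_cond\<close> by (auto simp: alpha_cond_def)
    then show ?thesis using False by (auto simp: msmult_eq)
  qed (simp add: msmult_eq mone_eq_mscalar mscalar_mult_mscalar)
  then have "alpha_part = (\<Sum>t\<in>{..N} \<times> {..N}. if t = (0, 0) then mscalar (xconst (\<alpha> 0 0)) else 0)"
    unfolding alpha_part_def by (intro sum.cong) (auto split: if_splits)
  then show ?thesis by simp
qed

lemma central_elem_if: "alpha_cond \<Longrightarrow> beta_cond \<Longrightarrow> central_F elem"
  using central_mscalar_plus[of "beta_part + gamma_part"] algF_elem
    strongly_commuting_add[OF strongly_commuting_beta_part strongly_commuting_gamma_part]
  by (simp add: alpha_part_eq add.assoc)

lemma central_elem_commutes:
  "central_F elem \<Longrightarrow> elem * C1 = C1 * elem \<and> elem * C2 = C2 * elem"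
  unfolding central_F_def mmult_eq_times by (blast intro: algF.gen1 algF.gen2)

lemma ydeg_ge1_beta_comb: "ydeg_ge1 (beta_comb j)"
  unfolding beta_comb_def by (intro ydeg_ge1_sum ydeg_ge1_msmult ydeg_ge1_ucomm)

lemma ydeg_ge1_beta_part: "ydeg_ge1 beta_part"
  unfolding beta_part_def by (simp add: ydeg_ge1_sum ydeg_ge1_mult_right ydeg_ge1_beta_comb)

lemma ydeg_ge2_gamma_part: "ydeg_ge2 gamma_part"
  unfolding gamma_part_def
  by (simp add: ydeg_ge2_sum ydeg_ge2_msmult ydeg_ge2_mult_right ydeg_ge2_mprod_list gu_len)

lemma coeffs_diag_elem:
  "coeffs (m11 elem) {} = (\<Sum>(n, m)\<in>{..N} \<times> {..N}. xconst (\<alpha> n m) * (xvar 0 ^ n * xvar 2 ^ m))"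
  "coeffs (m22 elem) {} = (\<Sum>(n, m)\<in>{..N} \<times> {..N}. xconst (\<alpha> n m) * (xvar 1 ^ n * xvar 3 ^ m))"
  using ydeg_ge1_coeffs[OF ydeg_ge1_beta_part] ydeg_ge2_coeffs[OF ydeg_ge2_gamma_part]
  by (simp_all add: alpha_part_def entries_add entries_sum coeffs_sum split_def msmult_eq
      coeffs_diag_mscalar_mult coeffs_monomial_low)

lemma xpoly_eval_alpha_sum:
  "xpoly_eval v (\<Sum>(n, m)\<in>{..N} \<times> {..N}. xconst (\<alpha> n m) * (xvar i ^ n * xvar j ^ m)) =
    (\<Sum>t\<in>{..N} \<times> {..N}. \<alpha> (fst t) (snd t) * (v i ^ fst t * v j ^ snd t))"
  by (simp add: xpoly_eval_simps split_def)

text \<open>Evaluate the equal diagonal constant terms at (x1, x1', x2, x2') = (a, 0, b, 0).\<close>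

lemma alpha_identity:
  assumes "central_F elem"
  shows "(\<Sum>t\<in>{..N} \<times> {..N}. \<alpha> (fst t) (snd t) * (a ^ fst t * b ^ snd t)) = \<alpha> 0 0"
proof -
  define v :: "nat \<Rightarrow> 'k" where "v i = (if i = 0 then a else if i = 2 then b else 0)" for i
  have "coeffs (m11 elem) {} = coeffs (m22 elem) {}"
    using central_coeffs_low central_elem_commutes[OF assms] by blast
  then have "xpoly_eval v (coeffs (m11 elem) {}) = xpoly_eval v (coeffs (m22 elem) {})"
    by simp
  then have "(\<Sum>t\<in>{..N} \<times> {..N}. \<alpha> (fst t) (snd t) * (a ^ fst t * b ^ snd t)) =
      (\<Sum>t\<in>{..N} \<times> {..N}. \<alpha> (fst t) (snd t) * (0 ^ fst t * 0 ^ snd t))"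
    unfolding coeffs_diag_elem xpoly_eval_alpha_sum by (simp add: v_def)
  also have "\<dots> = (\<Sum>t\<in>{..N} \<times> {..N}. if t = (0, 0) then \<alpha> 0 0 else 0)"
    by (intro sum.cong) (auto simp: power_0_left)
  finally show ?thesis by simp
qed

lemma alpha_cond_if_central:
  assumes "central_F elem"
  shows alpha_cond
  unfolding alpha_cond_def
proof (intro allI impI)
  fix n m :: nat assume "1 \<le> n + m"
  show "\<alpha> n m = 0"
  proof (cases "n \<le> N \<and> m \<le> N")
    case True
    define e :: "nat \<times> nat \<Rightarrow> nat \<Rightarrow> nat" where "e t i = [fst t, snd t] ! i" for t i
    define g where "g t = \<alpha> (fst t) (snd t) - (if t = (0, 0) then \<alpha> 0 0 else 0)" for t
    have "\<forall>x. (\<Sum>t\<in>{..N} \<times> {..N}. g t * (\<Prod>i<2. x i ^ e t i)) = 0"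
    proof
      fix x :: "nat \<Rightarrow> 'k"
      have "(\<Prod>i<2. x i ^ e t i) = x 0 ^ fst t * x 1 ^ snd t" for t
        by (simp add: e_def numeral_2_eq_2 lessThan_Suc)
      moreover have "(\<Sum>t\<in>{..N} \<times> {..N}. (if t = (0, 0) then \<alpha> 0 0 else 0) * (x 0 ^ fst t * x 1 ^ snd t)) =
          \<alpha> 0 0"
        by (simp add: if_distrib[of "\<lambda>c. c * _"] cong: if_cong)
      ultimately show "(\<Sum>t\<in>{..N} \<times> {..N}. g t * (\<Prod>i<2. x i ^ e t i)) = 0"
        using alpha_identity[OF assms] by (simp add: g_def left_diff_distrib sum_subtractf)
    qed
    from sum_monomials_eq_0_imp[OF K_infinite _ this, of "\<lambda>i. [n, m] ! i"]
    have "(\<Sum>t\<in>{t \<in> {..N} \<times> {..N}. \<forall>i<2. e t i = [n, m] ! i}. g t) = 0" by simp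
    moreover have "(\<forall>i<2. e t i = [n, m] ! i) \<longleftrightarrow> t = (n, m)" for t
      by (cases t) (auto simp: e_def numeral_2_eq_2 All_less_Suc)
    then have "{t \<in> {..N} \<times> {..N}. \<forall>i<2. e t i = [n, m] ! i} = {(n, m)}"
      using True by auto
    ultimately have "g (n, m) = 0" by simp
    moreover have "(n, m) \<noteq> (0, 0)" using \<open>1 \<le> n + m\<close> by auto
    then have "g (n, m) = \<alpha> n m"
      by (simp only: g_def fst_conv snd_conv if_False simp_thms diff_zero)
    ultimately show ?thesis by simp
  qed (use \<alpha>_supp in auto)
qed

lemma coeffs_m12_elem:
  assumes alpha_cond
  shows "coeffs (m12 elem) {2} = (\<Sum>j\<in>J. xvar 0 ^ nj j * xvar 2 ^ mj j *
    (\<Sum>i\<in>Idx j. xconst (\<beta> i j) * ((-1) ^ length (u i j) * gen_diff_prod (u i j) * gen_diff 1)))"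
proof -
  have "coeffs (m12 (beta_comb j)) {2} =
      (\<Sum>i\<in>Idx j. xconst (\<beta> i j) * ((-1) ^ length (u i j) * gen_diff_prod (u i j) * gen_diff 1))" for j
    by (simp add: beta_comb_def entries_sum coeffs_sum msmult_eq coeffs_m12_mscalar_mult coeffs_m12_ucomm)
  then have "coeffs (m12 beta_part) {2} = (\<Sum>j\<in>J. xvar 0 ^ nj j * xvar 2 ^ mj j *
      (\<Sum>i\<in>Idx j. xconst (\<beta> i j) * ((-1) ^ length (u i j) * gen_diff_prod (u i j) * gen_diff 1)))"
    by (simp add: beta_part_def entries_sum coeffs_sum coeffs_m12_mult_ydeg_ge1 ydeg_ge1_beta_comb
        coeffs_monomial_low)
  moreover have "coeffs (m12 alpha_part) {2} = 0"
    by (simp add: alpha_part_eq[OF assms] mscalar_def)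
  ultimately show ?thesis
    using ydeg_ge2_coeffs[OF ydeg_ge2_gamma_part] by (simp add: entries_add)
qed

text \<open>Evaluate the vanishing coefficient of y2 in the entry (1,2) at
  (x1, x1', x2, x2') = (a, a - c, b, b - d), which turns gen_diff 1 into c and gen_diff 2 into d.\<close>

lemma beta_identity:
  assumes "central_F elem"
  shows "(\<Sum>j\<in>J. \<Sum>i\<in>Idx j. \<beta> i j * (-1) ^ length (u i j) *
    (a ^ nj j * b ^ mj j * c ^ Suc (count_list (u i j) 1) * d ^ count_list (u i j) 2)) = 0"
proof -
  define v :: "nat \<Rightarrow> 'k" where "v i = [a, a - c, b, b - d] ! i" for i
  have "coeffs (m12 elem) {2} = 0"
    using central_coeffs_low central_elem_commutes[OF assms] by blast
  then have "xpoly_eval v (coeffs (m12 elem) {2}) = 0" by simp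
  moreover have "xpoly_eval v (gen_diff_prod (u i j)) = c ^ count_list (u i j) 1 * d ^ count_list (u i j) 2"
    if "j \<in> J" "i \<in> Idx j" for i j
    using xpoly_eval_gen_diff_prod[OF u_letters[OF that], of v] by (simp add: v_def)
  ultimately show ?thesis
    unfolding coeffs_m12_elem[OF alpha_cond_if_central[OF assms]]
    by (simp add: xpoly_eval_simps gen_diff_def v_def sum_distrib_left mult_ac cong: sum.cong)
qed

definition term_exponents :: "nat \<times> nat \<Rightarrow> nat list" where
  "term_exponents t =
    [nj (fst t), mj (fst t), Suc (count_list (u (snd t) (fst t)) 1), count_list (u (snd t) (fst t)) 2]"

lemma term_exponents_fiber:
  assumes "j0 \<in> J" "i0 \<in> Idx j0"
  shows "{t\<in>Sigma J Idx. \<forall>i<4. term_exponents t ! i = term_exponents (j0, i0) ! i} =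
    Pair j0 ` same_degree j0 i0"
proof -
  have "(\<forall>i<4. term_exponents t ! i = term_exponents (j0, i0) ! i) \<longleftrightarrow>
      (nj (fst t), mj (fst t)) = (nj j0, mj j0) \<and>
      count_list (u (snd t) (fst t)) 1 = count_list (u i0 j0) 1 \<and>
      count_list (u (snd t) (fst t)) 2 = count_list (u i0 j0) 2" for t
    by (simp add: term_exponents_def numeral_eq_Suc All_less_Suc conj_ac)
  then show ?thesis
    using J_distinct assms by (auto simp: same_degree_def deg1_def deg2_def inj_on_def)
qed

lemma beta_cond_if_central:
  assumes "central_F elem"
  shows beta_cond
  unfolding beta_cond_def
proof (intro ballI)
  fix j0 i0 assume j0: "j0 \<in> J" and i0: "i0 \<in> Idx j0"
  define g where "g t = \<beta> (snd t) (fst t) * (-1) ^ length (u (snd t) (fst t))" for t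
  have "\<forall>x. (\<Sum>t\<in>Sigma J Idx. g t * (\<Prod>i<4. x i ^ term_exponents t ! i)) = 0"
  proof
    fix x :: "nat \<Rightarrow> 'k"
    have "(\<Sum>t\<in>Sigma J Idx. g t * (\<Prod>i<4. x i ^ term_exponents t ! i)) =
        (\<Sum>j\<in>J. \<Sum>i\<in>Idx j. g (j, i) * (\<Prod>k<4. x k ^ term_exponents (j, i) ! k))"
      using J_fin Idx_fin by (simp add: sum.Sigma split_def)
    also have "\<dots> = 0"
      using beta_identity[OF assms, of "x 0" "x 1" "x 2" "x 3"]
      by (simp add: g_def term_exponents_def numeral_eq_Suc lessThan_Suc mult_ac)
    finally show "(\<Sum>t\<in>Sigma J Idx. g t * (\<Prod>i<4. x i ^ term_exponents t ! i)) = 0" .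
  qed
  from sum_monomials_eq_0_imp[OF K_infinite _ this, of "\<lambda>i. term_exponents (j0, i0) ! i"]
  have "(\<Sum>t\<in>Pair j0 ` same_degree j0 i0. g t) = 0"
    using J_fin Idx_fin by (simp add: term_exponents_fiber[OF j0 i0])
  moreover have "length (u p j0) = length (u i0 j0)" if "p \<in> same_degree j0 i0" for p
    using that length_eq_counts[OF u_letters[OF j0]] i0
    by (auto simp: same_degree_def deg1_def deg2_def)
  then have "(\<Sum>t\<in>Pair j0 ` same_degree j0 i0. g t) = (-1) ^ length (u i0 j0) * (\<Sum>p\<in>same_degree j0 i0. \<beta> p j0)"
    by (simp add: sum.reindex inj_on_def g_def sum_distrib_left mult.commute)
  ultimately show "(\<Sum>p\<in>same_degree j0 i0. \<beta> p j0) = 0" by simp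
qed

theorem central_elem_iff: "central_F elem \<longleftrightarrow> alpha_cond \<and> beta_cond"
  using central_elem_if alpha_cond_if_central beta_cond_if_central by blast

theorem strongly_central_elem_iff: "strongly_central_F elem \<longleftrightarrow> central_F elem \<and> \<alpha> 0 0 = 0"
proof (cases "alpha_cond \<and> beta_cond")
  case True
  have "strongly_commuting (beta_part + gamma_part)"
    using True by (simp add: strongly_commuting_add strongly_commuting_beta_part strongly_commuting_gamma_part)
  moreover have "elem = mscalar (xconst (\<alpha> 0 0)) + (beta_part + gamma_part)"
    using True by (simp add: alpha_part_eq add.assoc)
  ultimately show ?thesis
    using strongly_central_mscalar_plus_iff algF_elem central_elem_if True by metis
next
  case False
  then show ?thesis using central_elem_iff by (auto simp: strongly_central_F_def)
qed

end

theorem theorem1: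
  fixes \<alpha> :: "nat \<Rightarrow> nat \<Rightarrow> 'k::field"
    and N :: nat
    and J :: "nat set" and nj mj :: "nat \<Rightarrow> nat"
    and Idx :: "nat \<Rightarrow> nat set" and \<beta> :: "nat \<Rightarrow> nat \<Rightarrow> 'k" and u :: "nat \<Rightarrow> nat \<Rightarrow> nat list"
    and G :: "nat set" and \<gamma> :: "nat \<Rightarrow> 'k" and ga gb :: "nat \<Rightarrow> nat"
    and gu :: "nat \<Rightarrow> nat list list"
    and f :: "'k sc m2"
  assumes K_infinite: "infinite (UNIV :: 'k set)"
    and K_char: "(2::'k) \<noteq> 0"
    and \<alpha>_supp: "\<And>n m. N < n \<or> N < m \<Longrightarrow> \<alpha> n m = 0"
    and J_fin: "finite J"
    and J_distinct: "inj_on (\<lambda>j. (nj j, mj j)) J"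
    and Idx_fin: "\<And>j. j \<in> J \<Longrightarrow> finite (Idx j)"
    and u_letters: "\<And>i j. j \<in> J \<Longrightarrow> i \<in> Idx j \<Longrightarrow> set (u i j) \<subseteq> {1, 2}"
    and G_fin: "finite G"
    and gu_len: "\<And>k. k \<in> G \<Longrightarrow> 2 \<le> length (gu k)"
    and gu_letters: "\<And>k w. k \<in> G \<Longrightarrow> w \<in> set (gu k) \<Longrightarrow> set w \<subseteq> {1, 2}"
    and f_def: "f = (\<Sum>(n, m)\<in>{..N} \<times> {..N}. msmult (\<alpha> n m) (mmult (mpow C1 n) (mpow C2 m)))
        + (\<Sum>j\<in>J. mmult (mmult (mpow C1 (nj j)) (mpow C2 (mj j)))
                          (\<Sum>i\<in>Idx j. msmult (\<beta> i j) (ucomm (u i j))))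
        + (\<Sum>k\<in>G. msmult (\<gamma> k) (mmult (mmult (mpow C1 (ga k)) (mpow C2 (gb k)))
                                        (mprod_list (map ucomm (gu k)))))"
  shows "(central_F f \<longleftrightarrow>
            (\<forall>n m. 1 \<le> n + m \<longrightarrow> \<alpha> n m = 0) \<and>
            (\<forall>j\<in>J. \<forall>i\<in>Idx j.
               (\<Sum>p\<in>{p\<in>Idx j. deg1 (u p j) = deg1 (u i j) \<and> deg2 (u p j) = deg2 (u i j)}.
                  \<beta> p j) = 0))
       \<and> (strongly_central_F f \<longleftrightarrow> central_F f \<and> \<alpha> 0 0 = 0)"
proof -
  interpret presented_element \<alpha> N J nj mj Idx \<beta> u G \<gamma> ga gb gu
    using K_infinite \<alpha>_supp J_fin J_distinct Idx_fin u_letters gu_len by unfold_locales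
  have "f = elem"
    unfolding f_def alpha_part_def beta_part_def beta_comb_def gamma_part_def ..
  then show ?thesis
    using central_elem_iff strongly_central_elem_iff
    unfolding alpha_cond_def beta_cond_def same_degree_def by simp
qed

end
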